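(* Let $H$ be a complex infinite-dimensional separable Hilbert space and let $(f_n)_{n=1}^\infty$ be a frame for $H$ with analysis operator $U$. Then $(f_n)_{n=1}^\infty$ is a near-Riesz basis if and only if there exists a frame $(g_n)_{n=1}^\infty$ for $H$ with analysis operator $V$ such that $I-VU^*$ is a compact operator on $\ell^2$.
   Context: The analysis operator of a frame $(f_n)$ is $U:H\to\ell^2$, $Ux=(\langle x,f_n\rangle)_n$. The excess of a frame is the maximal number of elements that can be deleted so that the remaining sequence is still a frame; it equals $\dim\operatorname{Ker}U^*$. A near-Riesz basis is a frame with finite excess. *)

theory Defs
  imports "HOL-Analysis.Analysis" "HOL-Library.Extended_Nat"
begin

class cvector = real_vector +
  fixes scaleC :: "complex \<Rightarrow> 'a \<Rightarrow> 'a" (infixr \<open>*\<^sub>C\<close> 75)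
  assumes scaleC_add_right: "a *\<^sub>C (x + y) = a *\<^sub>C x + a *\<^sub>C y"
    and scaleC_add_left: "(a + b) *\<^sub>C x = a *\<^sub>C x + b *\<^sub>C x"
    and scaleC_scaleC: "a *\<^sub>C (b *\<^sub>C x) = (a * b) *\<^sub>C x"
    and scaleC_one: "1 *\<^sub>C x = x"
    and scaleR_scaleC: "r *\<^sub>R x = complex_of_real r *\<^sub>C x"

class cinner_space = cvector + real_normed_vector +
  fixes cinner :: "'a \<Rightarrow> 'a \<Rightarrow> complex"
  assumes cinner_conj: "cinner y x = cnj (cinner x y)"
    and cinner_add_left: "cinner (x + y) z = cinner x z + cinner y z"
    and cinner_scaleC_left: "cinner (a *\<^sub>C x) y = a * cinner x y"
    and cinner_self_nonneg: "0 \<le> Re (cinner x x)"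
    and norm_cinner: "norm x = sqrt (Re (cinner x x))"

class chilbert = cinner_space + complete_space

definition infinite_dimensional_C :: "'a::cvector itself \<Rightarrow> bool" where
  "infinite_dimensional_C _ \<longleftrightarrow>
     \<not> (\<exists>S::'a set. finite S \<and> (\<forall>x. \<exists>c. x = (\<Sum>s\<in>S. c s *\<^sub>C s)))"

definition l2 :: "(nat \<Rightarrow> complex) set" where
  "l2 = {a. summable (\<lambda>n. (cmod (a n))\<^sup>2)}"

definition l2norm :: "(nat \<Rightarrow> complex) \<Rightarrow> real" where
  "l2norm a = sqrt (\<Sum>n. (cmod (a n))\<^sup>2)"

definition l2inner :: "(nat \<Rightarrow> complex) \<Rightarrow> (nat \<Rightarrow> complex) \<Rightarrow> complex" where
  "l2inner a b = (\<Sum>n. a n * cnj (b n))"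

definition compact_op_l2 :: "((nat \<Rightarrow> complex) \<Rightarrow> (nat \<Rightarrow> complex)) \<Rightarrow> bool" where
  "compact_op_l2 T \<longleftrightarrow>
     (\<forall>a\<in>l2. T a \<in> l2) \<and>
     (\<forall>a\<in>l2. \<forall>b\<in>l2. \<forall>\<alpha> \<beta>.
        T (\<lambda>n. \<alpha> * a n + \<beta> * b n) = (\<lambda>n. \<alpha> * T a n + \<beta> * T b n)) \<and>
     (\<forall>(x :: nat \<Rightarrow> nat \<Rightarrow> complex) B. (\<forall>k. x k \<in> l2 \<and> l2norm (x k) \<le> B) \<longrightarrow>
        (\<exists>r y. strict_mono r \<and> y \<in> l2 \<and>
           (\<lambda>k. l2norm (\<lambda>n. T (x (r k)) n - y n)) \<longlonglongrightarrow> 0))"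

definition frame_on :: "nat set \<Rightarrow> (nat \<Rightarrow> 'a::chilbert) \<Rightarrow> bool" where
  "frame_on I f \<longleftrightarrow> (\<exists>A B. 0 < A \<and> 0 < B \<and>
     (\<forall>x. summable (\<lambda>n. if n \<in> I then (cmod (cinner x (f n)))\<^sup>2 else 0) \<and>
          A * (norm x)\<^sup>2 \<le> (\<Sum>n. if n \<in> I then (cmod (cinner x (f n)))\<^sup>2 else 0) \<and>
          (\<Sum>n. if n \<in> I then (cmod (cinner x (f n)))\<^sup>2 else 0) \<le> B * (norm x)\<^sup>2))"

definition frame :: "(nat \<Rightarrow> 'a::chilbert) \<Rightarrow> bool" where
  "frame f \<longleftrightarrow> frame_on UNIV f"

definition analysis_op :: "(nat \<Rightarrow> 'a::chilbert) \<Rightarrow> 'a \<Rightarrow> (nat \<Rightarrow> complex)" where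
  "analysis_op f x = (\<lambda>n. cinner x (f n))"

definition adjoint_l2 :: "('a::chilbert \<Rightarrow> (nat \<Rightarrow> complex)) \<Rightarrow> (nat \<Rightarrow> complex) \<Rightarrow> 'a" where
  "adjoint_l2 U c = (THE y. \<forall>x. cinner x y = l2inner (U x) c)"

definition excess :: "(nat \<Rightarrow> 'a::chilbert) \<Rightarrow> enat" where
  "excess f = Sup {if finite J then enat (card J) else \<infinity> | J. frame_on (- J) f}"

definition near_riesz_basis :: "(nat \<Rightarrow> 'a::chilbert) \<Rightarrow> bool" where
  "near_riesz_basis f \<longleftrightarrow> frame f \<and> excess f \<noteq> \<infinity>"

end

theory Submission
  imports Defs "HOL-Library.Function_Algebras"
begin

text \<open>
  Let \<open>U\<close> be the analysis operator of the frame \<open>f\<close>; its adjoint \<open>U\<^sup>*\<close> is the synthesis operator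
  \<open>c \<mapsto> \<Sum>n. c n f n\<close>, and \<open>K = Ker U\<^sup>*\<close> is the orthogonal complement of the range of
  \<open>U\<close> in \<open>\<ell>\<^sup>2\<close>. Both conditions of the theorem are equivalent to \<open>K\<close> being finite-dimensional.

  Excess: if \<open>K\<close> is infinite-dimensional, then for every finite \<open>J\<close> some \<open>c \<in> K\<close> vanishes on \<open>J\<close>
  but not at some \<open>m \<notin> J\<close>; since \<open>\<langle>x, f m\<rangle> c m = - \<Sum>\<^bsub>n\<noteq>m\<^esub> \<langle>x, f n\<rangle> c n\<close>, deleting \<open>f m\<close> as well
  keeps a frame, so arbitrarily many elements can be deleted. Conversely, if the elements indexed
  by \<open>J\<close> can be deleted, the remaining frame \<open>g\<close> reconstructs each \<open>f j\<close> as \<open>f j = \<Sum>n. d\<^sub>j n g n\<close>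
  with \<open>d\<^sub>j\<close> vanishing on \<open>J\<close>, and the \<open>\<delta>\<^sub>j - d\<^sub>j\<close> (\<open>j \<in> J\<close>) are \<open>card J\<close> independent vectors of \<open>K\<close>.

  Compactness: for the canonical dual frame \<open>g = S\<^sup>-\<^sup>1 f\<close> (with frame operator \<open>S = U\<^sup>* U\<close>, inverted
  by a Neumann series) the operator \<open>I - V U\<^sup>*\<close> is the orthogonal projection onto \<open>K\<close>, which is
  compact when \<open>K\<close> is finite-dimensional. Conversely, \<open>I - V U\<^sup>*\<close> is the identity on \<open>K\<close> for every
  \<open>V\<close>, and an infinite orthonormal sequence in \<open>K\<close> has no convergent subsequence.
\<close>

subclass (in chilbert) banach ..

section \<open>Complex inner product spaces\<close>

lemma scaleC_minus1: "(-1::complex) *\<^sub>C (x::'a::cvector) = - x"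
  using scaleR_scaleC[of "-1" x] by simp

lemma scaleC_zero_right [simp]: "a *\<^sub>C (0::'a::cvector) = 0"
proof -
  have "a *\<^sub>C (0::'a) = a *\<^sub>C 0 + a *\<^sub>C 0" by (metis add_0 scaleC_add_right)
  then show ?thesis by simp
qed

lemma scaleC_minus_right: "a *\<^sub>C (- x::'a::cvector) = - (a *\<^sub>C x)"
proof -
  have "a *\<^sub>C x + a *\<^sub>C (- x) = 0" using scaleC_add_right[of a x "-x"] by simp
  then show ?thesis by (simp add: eq_neg_iff_add_eq_0 add.commute)
qed

lemma scaleC_diff_right: "a *\<^sub>C (x - y::'a::cvector) = a *\<^sub>C x - a *\<^sub>C y"
  using scaleC_add_right[of a x "-y"] by (simp add: scaleC_minus_right)

lemma cnj_cinner [simp]: "cnj (cinner x y) = cinner y (x::'a::cinner_space)"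
  using cinner_conj[of y x] by simp

lemma cinner_add_right: "cinner x (y + z) = cinner x y + cinner (x::'a::cinner_space) z"
  by (metis cnj_cinner cinner_add_left complex_cnj_add)

lemma cinner_scaleC_right: "cinner x (a *\<^sub>C y) = cnj a * cinner (x::'a::cinner_space) y"
  by (metis cnj_cinner cinner_scaleC_left complex_cnj_mult)

lemma cinner_zero_left [simp]: "cinner 0 (y::'a::cinner_space) = 0"
  using cinner_scaleC_left[of 0 0 y] scaleR_scaleC[of 0 0] by simp

lemma cinner_zero_right [simp]: "cinner (x::'a::cinner_space) 0 = 0"
  using cinner_conj[of x 0] by simp

lemma cinner_minus_left: "cinner (- x) (y::'a::cinner_space) = - cinner x y"
  using cinner_scaleC_left[of "-1" x y] by (simp add: scaleC_minus1)

lemma cinner_minus_right: "cinner x (- y::'a::cinner_space) = - cinner x y"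
  using cinner_scaleC_right[of x "-1" y] by (simp add: scaleC_minus1)

lemma cinner_diff_left: "cinner (x - y) (z::'a::cinner_space) = cinner x z - cinner y z"
  using cinner_add_left[of x "-y" z] by (simp add: cinner_minus_left)

lemma cinner_diff_right: "cinner x (y - z::'a::cinner_space) = cinner x y - cinner x z"
  using cinner_add_right[of x y "-z"] by (simp add: cinner_minus_right)

lemma cinner_sum_right: "cinner y (\<Sum>i\<in>S. g i) = (\<Sum>i\<in>S. cinner (y::'a::cinner_space) (g i))"
  by (induct S rule: infinite_finite_induct) (auto simp: cinner_add_right)

lemma cinner_self: "cinner x (x::'a::cinner_space) = complex_of_real ((norm x)\<^sup>2)"
proof -
  have "Im (cinner x x) = 0" using arg_cong[OF cnj_cinner[of x x], of Im] by (simp del: cnj_cinner)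
  moreover have "Re (cinner x x) = (norm x)\<^sup>2"
    using norm_cinner[of x] cinner_self_nonneg[of x] by simp
  ultimately show ?thesis by (simp add: complex_eq_iff)
qed

lemma cinner_self_Re: "Re (cinner x (x::'a::cinner_space)) = (norm x)\<^sup>2"
  by (simp add: cinner_self)

lemma cmod_cinner_le: "cmod (cinner x y) \<le> norm x * norm (y::'a::cinner_space)"
proof (cases "y = 0")
  case True then show ?thesis by simp
next
  case False
  then have ny: "norm y > 0" by simp
  define t where "t = cinner x y / complex_of_real ((norm y)\<^sup>2)"
  have ty: "t * cinner y y = cinner x y" using ny by (simp add: t_def cinner_self)
  then have cty: "cnj t * cinner y y = cinner y x"
    by (metis cnj_cinner complex_cnj_mult)
  have sym: "t * cinner y x = cnj t * cinner x y" by (simp add: t_def)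
  have "0 \<le> Re (cinner (x - t *\<^sub>C y) (x - t *\<^sub>C y))" by (rule cinner_self_nonneg)
  also have "cinner (x - t *\<^sub>C y) (x - t *\<^sub>C y) = cinner x x - cnj t * cinner x y"
    using ty cty sym by (simp add: cinner_diff_left cinner_diff_right cinner_scaleC_left
        cinner_scaleC_right algebra_simps)
  also have "cnj t * cinner x y = complex_of_real ((cmod (cinner x y))\<^sup>2 / (norm y)\<^sup>2)"
  proof -
    have "cinner x y * cinner y x = complex_of_real ((cmod (cinner x y))\<^sup>2)"
      by (metis cnj_cinner complex_norm_square)
    then show ?thesis by (simp add: t_def mult.commute)
  qed
  finally have "(cmod (cinner x y))\<^sup>2 / (norm y)\<^sup>2 \<le> (norm x)\<^sup>2"
    by (simp add: cinner_self)
  then have "(cmod (cinner x y))\<^sup>2 \<le> (norm x * norm y)\<^sup>2"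
    using ny by (simp add: field_simps power_mult_distrib)
  then show ?thesis by (rule power2_le_imp_le) simp
qed

lemma cinner_ext_right: "(\<And>x. cinner x y = cinner x z) \<Longrightarrow> y = (z::'a::cinner_space)"
proof -
  assume h: "\<And>x. cinner x y = cinner x z"
  have "cinner (y - z) (y - z) = 0" using h[of "y - z"] by (simp add: cinner_diff_right)
  then have "norm (y - z) = 0" by (simp add: cinner_self)
  then show ?thesis by simp
qed

lemma cinner_ext_left: "(\<And>x. cinner y x = cinner z x) \<Longrightarrow> y = (z::'a::cinner_space)"
  by (rule cinner_ext_right) (metis cnj_cinner)

lemma bounded_linear_cinner_left: "bounded_linear (\<lambda>x. cinner x (y::'a::cinner_space))"
proof
  show "cinner (x + z) y = cinner x y + cinner z y" for x z by (rule cinner_add_left)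
  show "cinner (r *\<^sub>R x) y = r *\<^sub>R cinner x y" for r x
    by (simp add: scaleR_scaleC cinner_scaleC_left scaleR_conv_of_real)
  show "\<exists>K. \<forall>x. norm (cinner x y) \<le> norm x * K"
    by (rule exI[of _ "norm y"]) (simp add: cmod_cinner_le)
qed

lemma cinner_suminf_right:
  assumes "summable (g::nat \<Rightarrow> 'a::cinner_space)"
  shows "cinner x (suminf g) = (\<Sum>n. cinner x (g n))"
proof -
  have "(\<lambda>n. cinner (g n) x) sums cinner (suminf g) x"
    using bounded_linear.sums[OF bounded_linear_cinner_left summable_sums[OF assms]] .
  then have "(\<lambda>n. cinner x (g n)) sums cinner x (suminf g)"
    by (metis (no_types, lifting) sums_cnj cnj_cinner sums_cong)
  then show ?thesis by (simp add: sums_iff)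
qed

definition clinear :: "('a::cvector \<Rightarrow> 'b::cvector) \<Rightarrow> bool" where
  "clinear T \<longleftrightarrow> (\<forall>a x y. T (a *\<^sub>C x + y) = a *\<^sub>C T x + T y)"

lemma clinear_add: "clinear T \<Longrightarrow> T (x + y) = T x + T y"
  unfolding clinear_def using scaleC_one[of x] scaleC_one[of "T x"] by metis

lemma clinear_zero: "clinear T \<Longrightarrow> T 0 = 0"
  using clinear_add[of T 0 0] by simp

lemma clinear_scaleC: "clinear T \<Longrightarrow> T (a *\<^sub>C x) = a *\<^sub>C T x"
  unfolding clinear_def by (metis add_0_right clinear_def clinear_zero)

lemma clinear_diff: "clinear T \<Longrightarrow> T (x - y) = T x - T y"
  using clinear_add[of T x "-y"] clinear_scaleC[of T "-1" y] by (simp add: scaleC_minus1)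

lemma clinear_imp_bounded_linear:
  assumes "clinear T" "\<And>x. norm (T x) \<le> K * norm x"
  shows "bounded_linear T"
proof
  show "T (x + y) = T x + T y" for x y using clinear_add[OF assms(1)] .
  show "T (r *\<^sub>R x) = r *\<^sub>R T x" for r x
    using clinear_scaleC[OF assms(1), of "complex_of_real r" x] by (simp add: scaleR_scaleC)
  show "\<exists>K. \<forall>x. norm (T x) \<le> norm x * K" using assms(2) by (auto simp: mult.commute)
qed

section \<open>The sequence space \<open>\<ell>\<^sup>2\<close>\<close>

lemma l2_iff: "a \<in> l2 \<longleftrightarrow> summable (\<lambda>n. (cmod (a n))\<^sup>2)"
  by (simp add: l2_def)

lemma cmod_mult_le: "cmod x * cmod y \<le> ((cmod x)\<^sup>2 + (cmod y)\<^sup>2) / 2"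
proof -
  have "0 \<le> (cmod x - cmod y)\<^sup>2" by simp
  then show ?thesis by (simp add: power2_diff field_simps)
qed

lemma cmod_add_sq_le: "(cmod (x + y))\<^sup>2 \<le> 2 * (cmod x)\<^sup>2 + 2 * (cmod y)\<^sup>2"
proof -
  have "(cmod (x + y))\<^sup>2 \<le> (cmod x + cmod y)\<^sup>2" by (simp add: norm_triangle_ineq power_mono)
  also have "\<dots> \<le> 2 * (cmod x)\<^sup>2 + 2 * (cmod y)\<^sup>2"
    using cmod_mult_le[of x y] by (simp add: power2_sum)
  finally show ?thesis .
qed

lemma l2_add: "a \<in> l2 \<Longrightarrow> b \<in> l2 \<Longrightarrow> (\<lambda>n. a n + b n) \<in> l2"
  unfolding l2_iff
  by (rule summable_comparison_test'[of "\<lambda>n. 2 * (cmod (a n))\<^sup>2 + 2 * (cmod (b n))\<^sup>2"])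
     (auto intro!: summable_add summable_mult cmod_add_sq_le)

lemma l2_scale: "a \<in> l2 \<Longrightarrow> (\<lambda>n. c * a n) \<in> l2"
  unfolding l2_iff by (simp add: norm_mult power_mult_distrib summable_mult)

lemma l2_diff: "a \<in> l2 \<Longrightarrow> b \<in> l2 \<Longrightarrow> (\<lambda>n. a n - b n) \<in> l2"
  using l2_add[of a "\<lambda>n. - b n"] l2_scale[of b "-1"] by simp

lemma l2_zero: "(\<lambda>n. 0) \<in> l2"
  unfolding l2_iff by simp

lemma l2_lincomb: "a \<in> l2 \<Longrightarrow> b \<in> l2 \<Longrightarrow> (\<lambda>n. \<alpha> * a n + \<beta> * b n) \<in> l2"
  by (intro l2_add l2_scale)

lemma l2_finite_support: "finite {n. a n \<noteq> 0} \<Longrightarrow> a \<in> l2"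
  unfolding l2_iff by (rule summable_finite[of "{n. a n \<noteq> 0}"]) auto

lemma l2_sum: "(\<And>i. i \<in> S \<Longrightarrow> g i \<in> l2) \<Longrightarrow> (\<lambda>n. \<Sum>i\<in>S. g i n) \<in> l2"
  by (induct S rule: infinite_finite_induct) (simp_all add: l2_zero l2_add)

lemma summable_norm_l2inner:
  assumes "a \<in> l2" "b \<in> l2"
  shows "summable (\<lambda>n. cmod (a n * cnj (b n)))"
proof (rule summable_comparison_test')
  show "summable (\<lambda>n. ((cmod (a n))\<^sup>2 + (cmod (b n))\<^sup>2) / 2)"
    using assms unfolding l2_iff by (intro summable_divide summable_add)
  show "norm (cmod (a n * cnj (b n))) \<le> ((cmod (a n))\<^sup>2 + (cmod (b n))\<^sup>2) / 2" for n
    using cmod_mult_le by (simp add: norm_mult)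
qed

lemma summable_l2inner:
  assumes "a \<in> l2" "b \<in> l2"
  shows "summable (\<lambda>n. a n * cnj (b n))"
  using summable_norm_l2inner[OF assms] by (rule summable_norm_cancel)

lemma l2inner_add_left:
  assumes "a \<in> l2" "b \<in> l2" "c \<in> l2"
  shows "l2inner (\<lambda>n. a n + b n) c = l2inner a c + l2inner b c"
  unfolding l2inner_def using summable_l2inner[OF assms(1,3)] summable_l2inner[OF assms(2,3)]
  by (simp add: distrib_right suminf_add)

lemma l2inner_scale_left:
  assumes "a \<in> l2" "c \<in> l2"
  shows "l2inner (\<lambda>n. x * a n) c = x * l2inner a c"
  unfolding l2inner_def using summable_l2inner[OF assms] by (simp add: mult.assoc suminf_mult)

lemma l2inner_lincomb_left:
  assumes "a \<in> l2" "b \<in> l2" "c \<in> l2"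
  shows "l2inner (\<lambda>n. \<alpha> * a n + \<beta> * b n) c = \<alpha> * l2inner a c + \<beta> * l2inner b c"
  using l2inner_add_left[OF l2_scale[OF assms(1)] l2_scale[OF assms(2)] assms(3)]
  by (simp add: l2inner_scale_left assms)

lemma l2inner_diff_left:
  assumes "a \<in> l2" "b \<in> l2" "c \<in> l2"
  shows "l2inner (\<lambda>n. a n - b n) c = l2inner a c - l2inner b c"
  using l2inner_lincomb_left[OF assms, of 1 "-1"] by simp

lemma l2inner_conj:
  assumes "a \<in> l2" "b \<in> l2"
  shows "l2inner b a = cnj (l2inner a b)"
proof -
  have "(\<lambda>n. a n * cnj (b n)) sums l2inner a b"
    unfolding l2inner_def using summable_l2inner[OF assms] by (rule summable_sums)
  then have "(\<lambda>n. b n * cnj (a n)) sums cnj (l2inner a b)"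
    using sums_cnj by (fastforce simp: mult.commute)
  then show ?thesis unfolding l2inner_def by (simp add: sums_iff)
qed

lemma l2inner_lincomb_right:
  assumes "a \<in> l2" "b \<in> l2" "c \<in> l2"
  shows "l2inner c (\<lambda>n. \<alpha> * a n + \<beta> * b n) = cnj \<alpha> * l2inner c a + cnj \<beta> * l2inner c b"
proof -
  have "l2inner c (\<lambda>n. \<alpha> * a n + \<beta> * b n) = cnj (l2inner (\<lambda>n. \<alpha> * a n + \<beta> * b n) c)"
    using l2inner_conj[OF l2_lincomb[OF assms(1,2)] assms(3)] .
  also have "\<dots> = cnj \<alpha> * l2inner c a + cnj \<beta> * l2inner c b"
    using l2inner_lincomb_left[OF assms] l2inner_conj[OF assms(1,3)] l2inner_conj[OF assms(2,3)]
    by simp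
  finally show ?thesis .
qed

lemma l2inner_diff_right:
  assumes "a \<in> l2" "b \<in> l2" "c \<in> l2"
  shows "l2inner c (\<lambda>n. a n - b n) = l2inner c a - l2inner c b"
  using l2inner_lincomb_right[OF assms, of 1 "-1"] by simp

lemma l2inner_sum_left:
  assumes "\<And>i. i \<in> F \<Longrightarrow> g i \<in> l2" and "c \<in> l2"
  shows "l2inner (\<lambda>n. \<Sum>i\<in>F. g i n) c = (\<Sum>i\<in>F. l2inner (g i) c)"
  using assms(1)
proof (induct F rule: infinite_finite_induct)
  case (insert x F)
  then have "l2inner (\<lambda>n. g x n + (\<Sum>i\<in>F. g i n)) c =
      l2inner (g x) c + l2inner (\<lambda>n. \<Sum>i\<in>F. g i n) c"
    using assms(2) by (intro l2inner_add_left l2_sum) auto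
  with insert show ?case by simp
qed (simp_all add: l2inner_def)

lemma l2inner_zero_right [simp]: "l2inner c (\<lambda>n. 0) = 0"
  unfolding l2inner_def by simp

lemma l2inner_delta: "l2inner a (\<lambda>n. if n = j then 1 else 0) = a j"
proof -
  have "(\<lambda>n. a n * cnj (if n = j then 1 else 0)) = (\<lambda>n. if n = j then a j else 0)"
    by (auto simp: fun_eq_iff)
  then show ?thesis unfolding l2inner_def using sums_single[of j "\<lambda>_. a j"]
    by (simp add: sums_iff)
qed

lemma l2norm_nonneg: "a \<in> l2 \<Longrightarrow> 0 \<le> l2norm a"
  unfolding l2norm_def l2_iff by (simp add: suminf_nonneg)

lemma l2norm_sq: "a \<in> l2 \<Longrightarrow> (l2norm a)\<^sup>2 = (\<Sum>n. (cmod (a n))\<^sup>2)"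
  unfolding l2norm_def l2_iff by (simp add: suminf_nonneg)

lemma l2inner_self: "a \<in> l2 \<Longrightarrow> l2inner a a = complex_of_real ((l2norm a)\<^sup>2)"
proof -
  assume a: "a \<in> l2"
  have "l2inner a a = (\<Sum>n. complex_of_real ((cmod (a n))\<^sup>2))"
    unfolding l2inner_def by (simp only: complex_norm_square)
  also have "\<dots> = complex_of_real ((l2norm a)\<^sup>2)"
    using a unfolding l2_iff l2norm_sq[OF a] by (rule suminf_of_real[symmetric])
  finally show ?thesis .
qed

lemma l2norm_eq_1_iff: "a \<in> l2 \<Longrightarrow> l2norm a = 1 \<longleftrightarrow> l2inner a a = 1"
proof -
  assume a: "a \<in> l2"
  have "l2inner a a = 1 \<longleftrightarrow> (l2norm a)\<^sup>2 = 1"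
    unfolding l2inner_self[OF a] by (metis of_real_eq_1_iff)
  also have "\<dots> \<longleftrightarrow> l2norm a = 1" using l2norm_nonneg[OF a] by (simp add: power2_eq_1_iff)
  finally show ?thesis ..
qed

lemma l2norm_eq_0_iff: "a \<in> l2 \<Longrightarrow> l2norm a = 0 \<longleftrightarrow> a = (\<lambda>n. 0)"
proof
  assume a: "a \<in> l2" and "l2norm a = 0"
  then have "(\<Sum>n. (cmod (a n))\<^sup>2) = 0" using l2norm_sq[OF a] by simp
  then have "\<forall>n. (cmod (a n))\<^sup>2 = 0" using a unfolding l2_iff by (simp add: suminf_eq_zero_iff)
  then show "a = (\<lambda>n. 0)" by auto
qed (simp add: l2norm_def)

lemma l2norm_scale: "a \<in> l2 \<Longrightarrow> l2norm (\<lambda>n. c * a n) = cmod c * l2norm a"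
  unfolding l2norm_def l2_iff
  by (simp add: norm_mult power_mult_distrib suminf_mult real_sqrt_mult)

lemma sum_mult_le_sqrt:
  fixes a b :: "nat \<Rightarrow> real"
  shows "(\<Sum>i\<in>I. a i * b i) \<le> sqrt (\<Sum>i\<in>I. (a i)\<^sup>2) * sqrt (\<Sum>i\<in>I. (b i)\<^sup>2)"
proof -
  have "(\<Sum>i\<in>I. a i * b i)\<^sup>2 \<le> (\<Sum>i\<in>I. (a i)\<^sup>2) * (\<Sum>i\<in>I. (b i)\<^sup>2)"
    by (rule Cauchy_Schwarz_ineq_sum)
  then have "\<bar>\<Sum>i\<in>I. a i * b i\<bar> \<le> sqrt ((\<Sum>i\<in>I. (a i)\<^sup>2) * (\<Sum>i\<in>I. (b i)\<^sup>2))"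
    using real_sqrt_abs real_sqrt_le_mono by metis
  then show ?thesis by (simp add: real_sqrt_mult)
qed

lemma cmod_l2inner_le:
  assumes "a \<in> l2" "b \<in> l2"
  shows "cmod (l2inner a b) \<le> l2norm a * l2norm b"
proof -
  have s: "summable (\<lambda>n. cmod (a n * cnj (b n)))" by (rule summable_norm_l2inner[OF assms])
  have "cmod (l2inner a b) \<le> (\<Sum>n. cmod (a n * cnj (b n)))"
    unfolding l2inner_def using s by (rule summable_norm)
  also have "\<dots> \<le> l2norm a * l2norm b"
  proof (rule suminf_le_const[OF s])
    fix n
    have "(\<Sum>i<n. cmod (a i * cnj (b i))) = (\<Sum>i<n. cmod (a i) * cmod (b i))"
      by (simp add: norm_mult)
    also have "\<dots> \<le> sqrt (\<Sum>i<n. (cmod (a i))\<^sup>2) * sqrt (\<Sum>i<n. (cmod (b i))\<^sup>2)"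
      by (rule sum_mult_le_sqrt)
    also have "\<dots> \<le> l2norm a * l2norm b"
      unfolding l2norm_def using assms unfolding l2_iff
      by (intro mult_mono real_sqrt_le_mono sum_le_suminf) (auto intro!: suminf_nonneg sum_nonneg)
    finally show "(\<Sum>i<n. cmod (a i * cnj (b i))) \<le> l2norm a * l2norm b" .
  qed
  finally show ?thesis .
qed

lemma l2norm_triangle:
  assumes "a \<in> l2" "b \<in> l2"
  shows "l2norm (\<lambda>n. a n + b n) \<le> l2norm a + l2norm b"
proof -
  have ab: "(\<lambda>n. a n + b n) \<in> l2" by (rule l2_add[OF assms])
  have "complex_of_real ((l2norm (\<lambda>n. a n + b n))\<^sup>2) = l2inner (\<lambda>n. a n + b n) (\<lambda>n. a n + b n)"
    using l2inner_self[OF ab] by simp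
  also have "\<dots> = l2inner a a + l2inner a b + (l2inner b a + l2inner b b)"
    using l2inner_lincomb_left[OF assms ab, of 1 1] l2inner_lincomb_right[OF assms, of _ 1 1] assms
    by simp
  finally have "(l2norm (\<lambda>n. a n + b n))\<^sup>2 = Re (l2inner a a) + Re (l2inner b b) + 2 * Re (l2inner a b)"
    using l2inner_conj[OF assms(2,1)] by (simp add: complex_eq_iff)
  also have "\<dots> \<le> (l2norm a)\<^sup>2 + (l2norm b)\<^sup>2 + 2 * (l2norm a * l2norm b)"
    using l2inner_self[OF assms(1)] l2inner_self[OF assms(2)] cmod_l2inner_le[OF assms]
      complex_Re_le_cmod[of "l2inner a b"] by simp
  also have "\<dots> = (l2norm a + l2norm b)\<^sup>2" by (simp add: power2_sum)
  finally show ?thesis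
    by (rule power2_le_imp_le) (simp add: l2norm_nonneg add_nonneg_nonneg assms)
qed

lemma l2norm_diff_commute: "l2norm (\<lambda>n. a n - b n) = l2norm (\<lambda>n. b n - a n)"
  unfolding l2norm_def by (simp add: norm_minus_commute)

lemma l2norm_diff_le:
  assumes "a \<in> l2" "b \<in> l2"
  shows "l2norm (\<lambda>n. a n - b n) \<le> l2norm a + l2norm b"
  using l2norm_triangle[OF assms(1) l2_scale[OF assms(2), of "-1"]] l2norm_scale[OF assms(2), of "-1"]
  by simp

lemma l2norm_diff_triangle:
  assumes "a \<in> l2" "b \<in> l2" "c \<in> l2"
  shows "l2norm (\<lambda>n. a n - c n) \<le> l2norm (\<lambda>n. a n - b n) + l2norm (\<lambda>n. b n - c n)"
  using l2norm_triangle[OF l2_diff[OF assms(1,2)] l2_diff[OF assms(2,3)]] by simp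

lemma l2norm_sum:
  assumes "\<And>i. i \<in> S \<Longrightarrow> g i \<in> l2"
  shows "l2norm (\<lambda>n. \<Sum>i\<in>S. g i n) \<le> (\<Sum>i\<in>S. l2norm (g i))"
  using assms
proof (induct S rule: infinite_finite_induct)
  case (insert x F)
  then have "l2norm (\<lambda>n. g x n + (\<Sum>i\<in>F. g i n)) \<le> l2norm (g x) + l2norm (\<lambda>n. \<Sum>i\<in>F. g i n)"
    by (intro l2norm_triangle l2_sum) auto
  with insert show ?case by simp
qed (simp_all add: l2norm_def)

lemma sums_fun_upd_zero:
  fixes h :: "nat \<Rightarrow> 'b::real_normed_vector"
  assumes "h sums s"
  shows "h(m := 0) sums (s - h m)"
proof -
  have "h(m := 0) = (\<lambda>n. h n - (if n = m then h n else 0))" by auto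
  then show ?thesis using sums_diff[OF assms sums_single[of m h]] by simp
qed

lemma l2_fun_upd_zero: "a \<in> l2 \<Longrightarrow> a(m := 0) \<in> l2"
  unfolding l2_iff by (rule summable_comparison_test'[of "\<lambda>n. (cmod (a n))\<^sup>2"]) auto

lemma l2norm_fun_upd_zero:
  assumes a: "a \<in> l2"
  shows "(l2norm (a(m := 0)))\<^sup>2 = (l2norm a)\<^sup>2 - (cmod (a m))\<^sup>2"
proof -
  have "(\<lambda>n. (cmod (a n))\<^sup>2) sums (l2norm a)\<^sup>2"
    using a by (simp add: l2_iff l2norm_sq summable_sums)
  from sums_fun_upd_zero[OF this, of m]
  have "(\<lambda>n. (cmod ((a(m := 0)) n))\<^sup>2) sums ((l2norm a)\<^sup>2 - (cmod (a m))\<^sup>2)"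
    by (rule back_subst[of "\<lambda>h. h sums _"]) (simp add: fun_eq_iff)
  then show ?thesis by (simp add: l2norm_sq[OF l2_fun_upd_zero[OF a]] sums_iff)
qed

lemma l2inner_fun_upd_zero:
  assumes "a \<in> l2" "c \<in> l2"
  shows "l2inner (a(m := 0)) c = l2inner a c - a m * cnj (c m)"
proof -
  have "(\<lambda>n. a n * cnj (c n)) sums l2inner a c"
    using summable_l2inner[OF assms] by (simp add: l2inner_def summable_sums)
  from sums_fun_upd_zero[OF this, of m]
  have "(\<lambda>n. (a(m := 0)) n * cnj (c n)) sums (l2inner a c - a m * cnj (c m))"
    by (rule back_subst[of "\<lambda>h. h sums _"]) (simp add: fun_eq_iff)
  then show ?thesis by (simp add: l2inner_def sums_iff)
qed

definition subspace_l2 :: "(nat \<Rightarrow> complex) set \<Rightarrow> bool" where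
  "subspace_l2 W \<longleftrightarrow> W \<subseteq> l2 \<and> (\<lambda>n. 0) \<in> W \<and>
     (\<forall>a\<in>W. \<forall>b\<in>W. \<forall>\<alpha> \<beta>. (\<lambda>n. \<alpha> * a n + \<beta> * b n) \<in> W)"

lemma subspace_l2_lincomb:
  "subspace_l2 W \<Longrightarrow> a \<in> W \<Longrightarrow> b \<in> W \<Longrightarrow> (\<lambda>n. \<alpha> * a n + \<beta> * b n) \<in> W"
  unfolding subspace_l2_def by blast

lemma subspace_l2_zero: "subspace_l2 W \<Longrightarrow> (\<lambda>n. 0) \<in> W"
  unfolding subspace_l2_def by blast

lemma subspace_l2_subset: "subspace_l2 W \<Longrightarrow> a \<in> W \<Longrightarrow> a \<in> l2"
  unfolding subspace_l2_def by blast

lemma subspace_l2_scale: "subspace_l2 W \<Longrightarrow> a \<in> W \<Longrightarrow> (\<lambda>n. \<alpha> * a n) \<in> W"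
  using subspace_l2_lincomb[of W a a \<alpha> 0] by simp

lemma subspace_l2_diff: "subspace_l2 W \<Longrightarrow> a \<in> W \<Longrightarrow> b \<in> W \<Longrightarrow> (\<lambda>n. a n - b n) \<in> W"
  using subspace_l2_lincomb[of W a b 1 "-1"] by simp

lemma subspace_l2_sum:
  assumes W: "subspace_l2 W"
  shows "(\<And>i. i \<in> F \<Longrightarrow> g i \<in> W) \<Longrightarrow> (\<lambda>n. \<Sum>i\<in>F. g i n) \<in> W"
  using subspace_l2_zero[OF W] subspace_l2_lincomb[OF W, of _ _ 1 1]
  by (induct F rule: infinite_finite_induct) auto

lemma subspace_l2_l2: "subspace_l2 l2"
  unfolding subspace_l2_def by (auto intro: l2_lincomb l2_zero)

lemma subspace_l2_vanishing:
  "subspace_l2 V \<Longrightarrow> subspace_l2 {c \<in> V. c m = 0}"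
  unfolding subspace_l2_def by auto

definition lincomb :: "(nat \<Rightarrow> complex) list \<Rightarrow> (nat \<Rightarrow> complex) \<Rightarrow> (nat \<Rightarrow> complex)" where
  "lincomb Ob a = (\<lambda>n. \<Sum>i<length Ob. a i * (Ob!i) n)"

definition in_span :: "(nat \<Rightarrow> complex) list \<Rightarrow> (nat \<Rightarrow> complex) \<Rightarrow> bool" where
  "in_span Ob c \<longleftrightarrow> (\<exists>a. c = lincomb Ob a)"

definition orthonormal :: "(nat \<Rightarrow> complex) list \<Rightarrow> bool" where
  "orthonormal Ob \<longleftrightarrow> set Ob \<subseteq> l2 \<and>
     (\<forall>i<length Ob. \<forall>j<length Ob. l2inner (Ob!i) (Ob!j) = (if i = j then 1 else 0))"

definition finite_dim_l2 :: "(nat \<Rightarrow> complex) set \<Rightarrow> bool" where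
  "finite_dim_l2 W \<longleftrightarrow> (\<exists>Ob. orthonormal Ob \<and> set Ob \<subseteq> W \<and> (\<forall>w\<in>W. in_span Ob w))"

lemma lincomb_in_subspace:
  assumes "subspace_l2 W" "set Ob \<subseteq> W"
  shows "lincomb Ob a \<in> W"
  unfolding lincomb_def
  by (rule subspace_l2_sum[OF assms(1)]) (use assms nth_mem in \<open>auto intro!: subspace_l2_scale\<close>)

lemma lincomb_l2: "set Ob \<subseteq> l2 \<Longrightarrow> lincomb Ob a \<in> l2"
  by (rule lincomb_in_subspace[OF subspace_l2_l2])

lemma lincomb_cong: "(\<And>i. i < length Ob \<Longrightarrow> a i = b i) \<Longrightarrow> lincomb Ob a = lincomb Ob b"
  unfolding lincomb_def by auto

lemma lincomb_diff: "(\<lambda>n. lincomb Ob a n - lincomb Ob b n) = lincomb Ob (\<lambda>i. a i - b i)"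
  unfolding lincomb_def by (auto simp: sum_subtractf algebra_simps)

lemma lincomb_append: "lincomb (Ob @ [v]) a = (\<lambda>n. lincomb Ob a n + a (length Ob) * v n)"
  unfolding lincomb_def by (simp add: nth_append)

lemma in_span_append: "in_span Ob c \<Longrightarrow> in_span (Ob @ [v]) c"
proof -
  assume "in_span Ob c"
  then obtain a where "c = lincomb Ob a" unfolding in_span_def by blast
  moreover have "lincomb (Ob @ [v]) (\<lambda>i. if i < length Ob then a i else 0) = lincomb Ob a"
    unfolding lincomb_append by (simp add: lincomb_def)
  ultimately show ?thesis unfolding in_span_def by metis
qed

lemma in_span_last: "in_span (Ob @ [v]) v"
proof -
  have "lincomb (Ob @ [v]) (\<lambda>i. if i = length Ob then 1 else 0) = v"
    unfolding lincomb_append by (simp add: lincomb_def)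
  then show ?thesis unfolding in_span_def by metis
qed

lemma in_span_lincomb:
  "in_span Ob a \<Longrightarrow> in_span Ob b \<Longrightarrow> in_span Ob (\<lambda>n. \<alpha> * a n + \<beta> * b n)"
proof -
  assume "in_span Ob a" "in_span Ob b"
  then obtain x y where x: "a = lincomb Ob x" and y: "b = lincomb Ob y" unfolding in_span_def by blast
  have "(\<lambda>n. \<alpha> * a n + \<beta> * b n) = lincomb Ob (\<lambda>i. \<alpha> * x i + \<beta> * y i)"
    unfolding x y lincomb_def by (auto simp: sum_distrib_left sum.distrib algebra_simps)
  then show ?thesis unfolding in_span_def by blast
qed

lemma orthonormal_l2: "orthonormal Ob \<Longrightarrow> x \<in> set Ob \<Longrightarrow> x \<in> l2"
  unfolding orthonormal_def by blast

lemma orthonormal_nth_l2: "orthonormal Ob \<Longrightarrow> i < length Ob \<Longrightarrow> Ob!i \<in> l2"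
  by (simp add: orthonormal_l2)

lemma orthonormal_inner: "orthonormal Ob \<Longrightarrow> i < length Ob \<Longrightarrow> j < length Ob \<Longrightarrow>
   l2inner (Ob!i) (Ob!j) = (if i = j then 1 else 0)"
  unfolding orthonormal_def by blast

lemma l2inner_lincomb_orthonormal:
  assumes Ob: "orthonormal Ob" and j: "j < length Ob"
  shows "l2inner (lincomb Ob a) (Ob!j) = a j"
proof -
  have "l2inner (lincomb Ob a) (Ob!j) = (\<Sum>i<length Ob. l2inner (\<lambda>n. a i * (Ob!i) n) (Ob!j))"
    unfolding lincomb_def using Ob j by (intro l2inner_sum_left l2_scale orthonormal_nth_l2) auto
  also have "\<dots> = (\<Sum>i<length Ob. if i = j then a i else 0)"
    using Ob j by (intro sum.cong refl) (simp add: l2inner_scale_left orthonormal_nth_l2 orthonormal_inner)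
  also have "\<dots> = a j" using j by simp
  finally show ?thesis .
qed

lemma in_span_Fourier:
  assumes "orthonormal Ob" "in_span Ob c"
  shows "c = lincomb Ob (\<lambda>i. l2inner c (Ob!i))"
  using assms l2inner_lincomb_orthonormal lincomb_cong unfolding in_span_def by metis

lemma l2norm_lincomb_le:
  assumes Ob: "orthonormal Ob"
  shows "l2norm (lincomb Ob a) \<le> (\<Sum>i<length Ob. cmod (a i))"
proof -
  have "l2norm (lincomb Ob a) \<le> (\<Sum>i<length Ob. l2norm (\<lambda>n. a i * (Ob!i) n))"
    unfolding lincomb_def using Ob by (intro l2norm_sum l2_scale orthonormal_nth_l2) auto
  also have "\<dots> = (\<Sum>i<length Ob. cmod (a i))"
    using Ob by (intro sum.cong refl)
      (simp add: l2norm_scale orthonormal_nth_l2 l2norm_eq_1_iff orthonormal_inner)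
  finally show ?thesis .
qed

lemma orthonormal_append:
  assumes Ob: "orthonormal Ob" and v: "v \<in> l2" and vv: "l2inner v v = 1"
    and vOb: "\<And>j. j < length Ob \<Longrightarrow> l2inner v (Ob!j) = 0"
  shows "orthonormal (Ob @ [v])"
  unfolding orthonormal_def
proof (intro conjI allI impI)
  show "set (Ob @ [v]) \<subseteq> l2" using orthonormal_l2[OF Ob] v by auto
  have Obv: "l2inner (Ob!j) v = 0" if "j < length Ob" for j
    using l2inner_conj[OF v orthonormal_nth_l2[OF Ob that]] vOb[OF that] by simp
  fix i j assume "i < length (Ob @ [v])" "j < length (Ob @ [v])"
  then show "l2inner ((Ob @ [v]) ! i) ((Ob @ [v]) ! j) = (if i = j then 1 else 0)"
    using Ob vv vOb Obv by (auto simp: nth_append orthonormal_inner less_Suc_eq)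
qed

text \<open>One Gram--Schmidt step.\<close>

lemma orthonormal_extend:
  assumes W: "subspace_l2 W" and Ob: "orthonormal Ob" and ObW: "set Ob \<subseteq> W"
    and w: "w \<in> W" and nw: "\<not> in_span Ob w"
  obtains v where "v \<in> W" "orthonormal (Ob @ [v])" "in_span (Ob @ [v]) w"
proof -
  define p where "p = lincomb Ob (\<lambda>i. l2inner w (Ob!i))"
  define r where "r = (\<lambda>n. w n - p n)"
  have pW: "p \<in> W" unfolding p_def by (rule lincomb_in_subspace[OF W ObW])
  have rW: "r \<in> W" unfolding r_def by (rule subspace_l2_diff[OF W w pW])
  have r: "r \<in> l2" by (rule subspace_l2_subset[OF W rW])
  have rOb: "l2inner r (Ob!j) = 0" if j: "j < length Ob" for j
    using l2inner_diff_left[OF subspace_l2_subset[OF W w] subspace_l2_subset[OF W pW]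
        orthonormal_nth_l2[OF Ob j]] l2inner_lincomb_orthonormal[OF Ob j]
    by (simp add: r_def p_def)
  have "r \<noteq> (\<lambda>n. 0)"
  proof
    assume "r = (\<lambda>n. 0)"
    then have "w = p" unfolding r_def by (auto simp: fun_eq_iff)
    then show False using nw unfolding in_span_def p_def by blast
  qed
  then have \<rho>: "l2norm r > 0" using l2norm_eq_0_iff[OF r] l2norm_nonneg[OF r] by force
  define v where "v = (\<lambda>n. complex_of_real (1 / l2norm r) * r n)"
  have vW: "v \<in> W" unfolding v_def by (rule subspace_l2_scale[OF W rW])
  have v: "v \<in> l2" by (rule subspace_l2_subset[OF W vW])
  have "l2norm v = cmod (complex_of_real (1 / l2norm r)) * l2norm r"
    unfolding v_def by (rule l2norm_scale[OF r])
  then have "l2norm v = 1" using \<rho> by (simp add: norm_divide)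
  then have vv: "l2inner v v = 1" using l2norm_eq_1_iff[OF v] by simp
  have vOb: "l2inner v (Ob!j) = 0" if "j < length Ob" for j
  proof -
    have "l2inner v (Ob!j) = complex_of_real (1 / l2norm r) * l2inner r (Ob!j)"
      unfolding v_def by (rule l2inner_scale_left[OF r orthonormal_nth_l2[OF Ob that]])
    then show ?thesis by (simp add: rOb[OF that])
  qed
  have "r n = complex_of_real (l2norm r) * v n" for n using \<rho> by (simp add: v_def)
  moreover have "w n = p n + r n" for n by (simp add: r_def)
  ultimately have "w = (\<lambda>n. 1 * p n + complex_of_real (l2norm r) * v n)" by (simp add: fun_eq_iff)
  moreover have "in_span (Ob @ [v]) (\<lambda>n. 1 * p n + complex_of_real (l2norm r) * v n)"
    by (rule in_span_lincomb[OF in_span_append in_span_last]) (auto simp: in_span_def p_def)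
  ultimately show ?thesis using that vW orthonormal_append[OF Ob v vv vOb] by auto
qed

section \<open>Finite-dimensional and infinite-dimensional subspaces of \<open>\<ell>\<^sup>2\<close>\<close>

lemma infinite_dim_orthonormal_extend:
  assumes "subspace_l2 W" "\<not> finite_dim_l2 W" "orthonormal Ob" "set Ob \<subseteq> W"
  obtains v where "v \<in> W" "orthonormal (Ob @ [v])"
  using assms orthonormal_extend unfolding finite_dim_l2_def by metis

lemma infinite_dim_orthonormal_seq:
  assumes W: "subspace_l2 W" and nf: "\<not> finite_dim_l2 W"
  obtains u :: "nat \<Rightarrow> nat \<Rightarrow> complex"
  where "\<And>k. u k \<in> W" "\<And>k l. l2inner (u k) (u l) = (if k = l then 1 else 0)"
proof -
  define P where "P n Ob \<longleftrightarrow> orthonormal Ob \<and> set Ob \<subseteq> W \<and> length Ob = n" for n Ob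
  have "\<exists>gs. \<forall>n. P n (gs n) \<and> (\<exists>v. gs (Suc n) = gs n @ [v])"
  proof (rule dependent_nat_choice)
    show "\<exists>Ob. P 0 Ob" by (auto simp: P_def orthonormal_def)
    fix Ob n assume "P n Ob"
    then obtain v where "v \<in> W" "orthonormal (Ob @ [v])"
      using infinite_dim_orthonormal_extend[OF W nf] unfolding P_def by blast
    with \<open>P n Ob\<close> show "\<exists>Ob'. P (Suc n) Ob' \<and> (\<exists>v. Ob' = Ob @ [v])"
      by (intro exI[of _ "Ob @ [v]"]) (auto simp: P_def)
  qed
  then obtain gs where P: "\<And>n. P n (gs n)" and gs: "\<And>n. \<exists>v. gs (Suc n) = gs n @ [v]" by blast
  have take: "gs n = take n (gs (n + k))" for n k
  proof (induct k)
    case (Suc k)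
    obtain v where "gs (Suc (n + k)) = gs (n + k) @ [v]" using gs by blast
    with Suc P[of "n + k"] show ?case by (simp add: P_def)
  qed (use P in \<open>simp add: P_def\<close>)
  define u where "u k = gs (Suc k) ! k" for k
  have u: "u k = gs N ! k" if "k < N" for k N
  proof -
    from that obtain j where "N = Suc k + j" by (auto simp: less_iff_Suc_add)
    then show ?thesis unfolding u_def using take[of "Suc k" j] by simp
  qed
  show ?thesis
  proof
    show "u k \<in> W" for k unfolding u_def using P[of "Suc k"] nth_mem by (force simp: P_def)
    show "l2inner (u k) (u l) = (if k = l then 1 else 0)" for k l
      using P[of "Suc (max k l)"] u[of k "Suc (max k l)"] u[of l "Suc (max k l)"]
      by (simp add: P_def orthonormal_inner)
  qed
qed

lemma orthonormal_seq_no_convergent_subseq: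
  assumes u: "\<And>k. u k \<in> l2" and orth: "\<And>k l. l2inner (u k) (u l) = (if k = l then 1 else 0)"
    and r: "strict_mono r" and y: "y \<in> l2"
  shows "\<not> (\<lambda>k. l2norm (\<lambda>n. u (r k) n - y n)) \<longlonglongrightarrow> 0"
proof
  assume "(\<lambda>k. l2norm (\<lambda>n. u (r k) n - y n)) \<longlonglongrightarrow> 0"
  then obtain N where N: "\<And>k. k \<ge> N \<Longrightarrow> \<bar>l2norm (\<lambda>n. u (r k) n - y n)\<bar> < 1/2"
    using LIMSEQ_D[of _ 0 "1/2"] by fastforce
  define a b where "a = u (r N)" and "b = u (r (Suc N))"
  have "r N \<noteq> r (Suc N)" by (simp add: strict_mono_eq[OF r])
  then have "l2inner (\<lambda>n. a n - b n) (\<lambda>n. a n - b n) = 2"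
    using orth u by (simp add: a_def b_def l2inner_diff_left l2inner_diff_right l2_diff)
  then have "(l2norm (\<lambda>n. a n - b n))\<^sup>2 = 2"
    using l2inner_self[OF l2_diff[OF u u]] unfolding a_def b_def by (metis of_real_numeral of_real_eq_iff)
  then have "sqrt 2 = l2norm (\<lambda>n. a n - b n)"
    using l2norm_nonneg[OF l2_diff[OF u u]] unfolding a_def b_def by (simp add: real_sqrt_unique)
  also have "\<dots> \<le> l2norm (\<lambda>n. a n - y n) + l2norm (\<lambda>n. y n - b n)"
    unfolding a_def b_def by (rule l2norm_diff_triangle[OF u y u])
  also have "\<dots> < 1"
    using N[of N] N[of "Suc N"] l2norm_diff_commute[of y b] unfolding a_def b_def by auto
  finally show False by simp
qed

lemma convergent_subseq_coordinates:
  fixes d :: "nat \<Rightarrow> nat \<Rightarrow> complex"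
  assumes "\<And>k i. i < m \<Longrightarrow> cmod (d k i) \<le> C"
  shows "\<exists>r L. strict_mono r \<and> (\<forall>i<m. (\<lambda>k. d (r k) i) \<longlonglongrightarrow> L i)"
  using assms
proof (induct m)
  case 0 then show ?case using strict_mono_id by blast
next
  case (Suc m)
  then obtain r L where r: "strict_mono r" and L: "\<forall>i<m. (\<lambda>k. d (r k) i) \<longlonglongrightarrow> L i" by auto
  have "bounded (range (\<lambda>k. d (r k) m))"
    unfolding bounded_iff using Suc.prems[of m] by auto
  then obtain l r' where r': "strict_mono r'" and l: "((\<lambda>k. d (r k) m) \<circ> r') \<longlonglongrightarrow> l"
    using bounded_imp_convergent_subsequence by blast
  have "\<forall>i<Suc m. (\<lambda>k. d ((r \<circ> r') k) i) \<longlonglongrightarrow> (L(m := l)) i"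
    using l L LIMSEQ_subseq_LIMSEQ[OF _ r'] by (auto simp: less_Suc_eq o_def)
  then show ?case using strict_mono_o[OF r r'] by blast
qed

lemma finite_dim_bounded_convergent_subseq:
  fixes y :: "nat \<Rightarrow> nat \<Rightarrow> complex"
  assumes W: "subspace_l2 W" and fd: "finite_dim_l2 W"
    and y: "\<And>k. y k \<in> W" and y_le: "\<And>k. l2norm (y k) \<le> C"
  shows "\<exists>r z. strict_mono r \<and> z \<in> l2 \<and> (\<lambda>k. l2norm (\<lambda>n. y (r k) n - z n)) \<longlonglongrightarrow> 0"
proof -
  obtain Ob where Ob: "orthonormal Ob" and ObW: "set Ob \<subseteq> W" and span: "\<forall>w\<in>W. in_span Ob w"
    using fd unfolding finite_dim_l2_def by blast
  define d where "d k i = l2inner (y k) (Ob!i)" for k i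
  have yl2: "y k \<in> l2" for k using subspace_l2_subset[OF W y] .
  have "cmod (d k i) \<le> C" if "i < length Ob" for k i
  proof -
    have "l2norm (Ob!i) = 1"
      using l2norm_eq_1_iff[OF orthonormal_nth_l2[OF Ob that]] orthonormal_inner[OF Ob that that]
      by simp
    then show ?thesis
      using cmod_l2inner_le[OF yl2 orthonormal_nth_l2[OF Ob that], of k] y_le[of k]
      unfolding d_def by simp
  qed
  then obtain r L where r: "strict_mono r" and L: "\<forall>i<length Ob. (\<lambda>k. d (r k) i) \<longlonglongrightarrow> L i"
    using convergent_subseq_coordinates[of "length Ob" d C] by blast
  define z where "z = lincomb Ob L"
  have z: "z \<in> l2" unfolding z_def by (rule lincomb_l2) (use Ob orthonormal_l2 in auto)
  have "y k = lincomb Ob (d k)" for k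
    using in_span_Fourier[OF Ob] span y[of k] unfolding d_def by simp
  then have "(\<lambda>n. y (r k) n - z n) = lincomb Ob (\<lambda>i. d (r k) i - L i)" for k
    unfolding z_def using lincomb_diff[of Ob "d (r k)" L] by simp
  then have le: "l2norm (\<lambda>n. y (r k) n - z n) \<le> (\<Sum>i<length Ob. cmod (d (r k) i - L i))" for k
    using l2norm_lincomb_le[OF Ob] by simp
  have lim: "(\<lambda>k. \<Sum>i<length Ob. cmod (d (r k) i - L i)) \<longlonglongrightarrow> 0"
    using L by (intro tendsto_null_sum tendsto_norm_zero LIM_zero) simp
  have "(\<lambda>k. l2norm (\<lambda>n. y (r k) n - z n)) \<longlonglongrightarrow> 0"
  proof (rule real_tendsto_sandwich[OF _ _ tendsto_const lim])
    show "\<forall>\<^sub>F k in sequentially. 0 \<le> l2norm (\<lambda>n. y (r k) n - z n)"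
      using l2norm_nonneg[OF l2_diff[OF yl2 z]] by simp
    show "\<forall>\<^sub>F k in sequentially. l2norm (\<lambda>n. y (r k) n - z n) \<le> (\<Sum>i<length Ob. cmod (d (r k) i - L i))"
      using le by simp
  qed
  then show ?thesis using r z by blast
qed

lemma infinite_dim_vanishing_at:
  assumes V: "subspace_l2 V" and nf: "\<not> finite_dim_l2 V"
  shows "\<not> finite_dim_l2 {c \<in> V. c m = 0}"
proof
  assume "finite_dim_l2 {c \<in> V. c m = 0}"
  then obtain Ob where Ob: "orthonormal Ob" and ObV: "set Ob \<subseteq> V"
    and span: "\<And>c. c \<in> V \<Longrightarrow> c m = 0 \<Longrightarrow> in_span Ob c"
    unfolding finite_dim_l2_def by auto
  show False
  proof (cases "\<forall>c\<in>V. c m = 0")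
    case True
    then show False using nf Ob ObV span unfolding finite_dim_l2_def by auto
  next
    case False
    then obtain c0 where c0: "c0 \<in> V" and c0m: "c0 m \<noteq> 0" by auto
    define e where "e = (\<lambda>n. (1 / c0 m) * c0 n)"
    have eV: "e \<in> V" unfolding e_def by (rule subspace_l2_scale[OF V c0])
    have em: "e m = 1" using c0m by (simp add: e_def)
    obtain Ob' where Ob': "orthonormal Ob'" and Ob'V: "set Ob' \<subseteq> V"
      and mono: "\<And>c. in_span Ob c \<Longrightarrow> in_span Ob' c" and e_span: "in_span Ob' e"
    proof (cases "in_span Ob e")
      case False
      then obtain v where "v \<in> V" "orthonormal (Ob @ [v])" "in_span (Ob @ [v]) e"
        by (rule orthonormal_extend[OF V Ob ObV eV])
      then show ?thesis using that[of "Ob @ [v]"] ObV in_span_append by auto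
    qed (use that Ob ObV in blast)
    have "in_span Ob' c" if c: "c \<in> V" for c
    proof -
      have "(\<lambda>n. 1 * c n + (- c m) * e n) \<in> V" by (rule subspace_l2_lincomb[OF V c eV])
      then have "in_span Ob' (\<lambda>n. 1 * c n + (- c m) * e n)" using em by (intro mono span) auto
      from in_span_lincomb[of Ob' _ e 1 "c m", OF this e_span] show ?thesis by simp
    qed
    then show False using nf Ob' Ob'V unfolding finite_dim_l2_def by blast
  qed
qed

lemma finite_dim_l2_trivial: "\<forall>c\<in>W. c = (\<lambda>n. 0) \<Longrightarrow> finite_dim_l2 W"
  unfolding finite_dim_l2_def
  by (rule exI[of _ "[]"]) (simp add: orthonormal_def in_span_def lincomb_def)

lemma infinite_dim_nonzero_vanishing_on:
  assumes V: "subspace_l2 V" and nf: "\<not> finite_dim_l2 V" and J: "finite J"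
  obtains c m where "c \<in> V" "\<forall>j\<in>J. c j = 0" "c m \<noteq> 0"
proof -
  have "subspace_l2 {c \<in> V. \<forall>j\<in>J. c j = 0} \<and> \<not> finite_dim_l2 {c \<in> V. \<forall>j\<in>J. c j = 0}"
    using J
  proof (induct J rule: finite_induct)
    case (insert m J)
    let ?V = "{c \<in> V. \<forall>j\<in>J. c j = 0}"
    have "{c \<in> V. \<forall>j\<in>insert m J. c j = 0} = {c \<in> ?V. c m = 0}" by auto
    then show ?case
      using insert(3) subspace_l2_vanishing[of ?V m] infinite_dim_vanishing_at[of ?V m] by simp
  qed (use V nf in simp)
  then have "\<not> (\<forall>c\<in>{c \<in> V. \<forall>j\<in>J. c j = 0}. c = (\<lambda>n. 0))"
    using finite_dim_l2_trivial by blast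
  then show ?thesis using that by (auto simp: fun_eq_iff)
qed

interpretation seq: vector_space "\<lambda>(a::complex) (c::nat \<Rightarrow> complex). (\<lambda>n. a * c n)"
  by unfold_locales (auto simp: fun_eq_iff algebra_simps)

lemma sum_fun_apply: "(\<Sum>i\<in>F. g i) x = (\<Sum>i\<in>F. (g i :: 'b \<Rightarrow> 'c::comm_monoid_add) x)"
  by (induct F rule: infinite_finite_induct) auto

text \<open>
  A family of vectors of \<open>W\<close> that restricts to the unit vectors on \<open>J\<close> is linearly independent,
  hence \<open>J\<close> is no larger than a spanning list of \<open>W\<close>.
\<close>

lemma card_le_length_spanning_list:
  assumes span: "\<And>w. w \<in> W \<Longrightarrow> in_span Ob w"
    and J: "finite J" and d: "\<And>j. j \<in> J \<Longrightarrow> d j \<in> W"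
    and delta: "\<And>i j. i \<in> J \<Longrightarrow> j \<in> J \<Longrightarrow> d j i = (if i = j then 1 else 0)"
  shows "card J \<le> length Ob"
proof -
  have inj: "inj_on d J"
    by (rule inj_onI) (metis delta one_neq_zero)
  have "seq.independent (d ` J)"
  proof (rule seq.independent_if_scalars_zero)
    fix c x assume s: "(\<Sum>x\<in>d ` J. (\<lambda>n. c x * x n)) = 0" and "x \<in> d ` J"
    then obtain j where j: "j \<in> J" and xj: "x = d j" by blast
    have "0 = (\<Sum>y\<in>d ` J. c y * y j)" using arg_cong[OF s, of "\<lambda>g. g j"] by (simp add: sum_fun_apply)
    also have "\<dots> = (\<Sum>i\<in>J. if i = j then c (d j) else 0)"
      using j delta by (simp add: sum.reindex[OF inj]) (intro sum.cong refl; auto)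
    finally show "c x = 0" using xj J j by simp
  qed (use J in simp)
  moreover have "d ` J \<subseteq> seq.span (set Ob)"
  proof
    fix x assume "x \<in> d ` J"
    then obtain a where "x = lincomb Ob a" using d span unfolding in_span_def by blast
    also have "lincomb Ob a = (\<Sum>i<length Ob. (\<lambda>n. a i * (Ob!i) n))"
      unfolding lincomb_def by (auto simp: fun_eq_iff sum_fun_apply)
    also have "\<dots> \<in> seq.span (set Ob)"
      by (intro seq.span_sum seq.span_scale seq.span_base) simp
    finally show "x \<in> seq.span (set Ob)" .
  qed
  ultimately have "card (d ` J) \<le> card (set Ob)"
    using seq.independent_span_bound by simp
  then show ?thesis using card_image[OF inj] card_length[of Ob] by simp
qed

section \<open>Bessel sequences and frames\<close>

text \<open>The kernel of the synthesis operator \<open>U\<^sup>*\<close>, i.e.\ the orthogonal complement of the range of \<open>U\<close>.\<close>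

definition ker_syn :: "(nat \<Rightarrow> 'a::chilbert) \<Rightarrow> (nat \<Rightarrow> complex) set" where
  "ker_syn f = {c \<in> l2. \<forall>x. l2inner (analysis_op f x) c = 0}"

locale bessel_seq =
  fixes f :: "nat \<Rightarrow> 'a::chilbert" and B :: real
  assumes B_pos: "0 < B"
    and bessel_summable: "\<And>x. summable (\<lambda>n. (cmod (cinner x (f n)))\<^sup>2)"
    and bessel_bound: "\<And>x. (\<Sum>n. (cmod (cinner x (f n)))\<^sup>2) \<le> B * (norm x)\<^sup>2"
begin

abbreviation U where "U \<equiv> analysis_op f"

lemma U_apply: "U x n = cinner x (f n)"
  by (simp add: analysis_op_def)

lemma U_l2: "U x \<in> l2"
  unfolding l2_iff U_apply by (rule bessel_summable)

lemma l2norm_U_sq: "(l2norm (U x))\<^sup>2 = (\<Sum>n. (cmod (cinner x (f n)))\<^sup>2)"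
  using l2norm_sq[OF U_l2] by (simp add: U_apply)

lemma l2norm_U_le: "l2norm (U x) \<le> sqrt B * norm x"
proof -
  have "(l2norm (U x))\<^sup>2 \<le> (sqrt B * norm x)\<^sup>2"
    using bessel_bound[of x] B_pos by (simp add: l2norm_U_sq power_mult_distrib)
  then show ?thesis by (rule power2_le_imp_le) (simp add: less_imp_le[OF B_pos])
qed

lemma U_lincomb: "U (a *\<^sub>C x + b *\<^sub>C y) = (\<lambda>n. a * U x n + b * U y n)"
  by (simp add: analysis_op_def cinner_add_left cinner_scaleC_left)

definition syn :: "(nat \<Rightarrow> complex) \<Rightarrow> 'a" where
  "syn c = (\<Sum>n. c n *\<^sub>C f n)"

lemma norm_sum_synthesis_le:
  assumes "finite F"
  shows "norm (\<Sum>n\<in>F. c n *\<^sub>C f n) \<le> sqrt B * sqrt (\<Sum>n\<in>F. (cmod (c n))\<^sup>2)"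
proof -
  define s where "s = (\<Sum>n\<in>F. c n *\<^sub>C f n)"
  have "(norm s)\<^sup>2 = Re (cinner s (\<Sum>n\<in>F. c n *\<^sub>C f n))"
    by (simp add: cinner_self_Re s_def)
  also have "\<dots> = Re (\<Sum>n\<in>F. cnj (c n) * cinner s (f n))"
    by (simp add: cinner_sum_right cinner_scaleC_right)
  also have "\<dots> \<le> (\<Sum>n\<in>F. cmod (c n) * cmod (cinner s (f n)))"
    unfolding Re_sum
    by (intro sum_mono) (metis complex_Re_le_cmod complex_mod_cnj norm_mult)
  also have "\<dots> \<le> sqrt (\<Sum>n\<in>F. (cmod (c n))\<^sup>2) * sqrt (\<Sum>n\<in>F. (cmod (cinner s (f n)))\<^sup>2)"
    by (rule sum_mult_le_sqrt)
  also have "\<dots> \<le> sqrt (\<Sum>n\<in>F. (cmod (c n))\<^sup>2) * (sqrt B * norm s)"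
  proof (rule mult_left_mono)
    have "(\<Sum>n\<in>F. (cmod (cinner s (f n)))\<^sup>2) \<le> (\<Sum>n. (cmod (cinner s (f n)))\<^sup>2)"
      using assms bessel_summable by (intro sum_le_suminf) auto
    also have "\<dots> \<le> (sqrt B * norm s)\<^sup>2"
      using bessel_bound B_pos by (simp add: power_mult_distrib)
    finally show "sqrt (\<Sum>n\<in>F. (cmod (cinner s (f n)))\<^sup>2) \<le> sqrt B * norm s"
      using B_pos by (simp add: real_le_lsqrt)
  qed (simp add: sum_nonneg)
  finally have "norm s * norm s \<le> norm s * (sqrt B * sqrt (\<Sum>n\<in>F. (cmod (c n))\<^sup>2))"
    by (simp add: power2_eq_square algebra_simps)
  then show ?thesis unfolding s_def[symmetric]
    by (cases "norm s = 0") (use B_pos in \<open>auto simp: sum_nonneg\<close>)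
qed

lemma summable_synthesis:
  assumes "c \<in> l2"
  shows "summable (\<lambda>n. c n *\<^sub>C f n)"
  unfolding summable_Cauchy
proof (intro allI impI)
  fix e :: real assume e: "e > 0"
  define d where "d = (e / (sqrt B + 1))\<^sup>2"
  have sB: "sqrt B \<ge> 0" using B_pos by simp
  then have "sqrt B + 1 > 0" by linarith
  have "d > 0" unfolding d_def using e \<open>sqrt B + 1 > 0\<close> by simp
  then obtain N where N: "\<And>m n. m \<ge> N \<Longrightarrow> norm (\<Sum>k=m..<n. (cmod (c k))\<^sup>2) < d"
    using assms unfolding l2_iff summable_Cauchy by meson
  show "\<exists>N. \<forall>m\<ge>N. \<forall>n. norm (\<Sum>k=m..<n. c k *\<^sub>C f k) < e"
  proof (intro exI allI impI)
    fix m n assume m: "m \<ge> N"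
    have "sqrt (\<Sum>k=m..<n. (cmod (c k))\<^sup>2) < sqrt d"
      using N[OF m, of n] by (simp add: sum_nonneg)
    also have "sqrt d = e / (sqrt B + 1)" unfolding d_def using e \<open>sqrt B + 1 > 0\<close> by simp
    finally have "sqrt B * sqrt (\<Sum>k=m..<n. (cmod (c k))\<^sup>2) \<le> sqrt B * (e / (sqrt B + 1))"
      using sB by (intro mult_left_mono) auto
    also have "\<dots> < e" using e \<open>sqrt B + 1 > 0\<close> by (simp add: field_simps)
    finally show "norm (\<Sum>k=m..<n. c k *\<^sub>C f k) < e"
      using norm_sum_synthesis_le[of "{m..<n}" c] by simp
  qed
qed

lemma cinner_syn:
  assumes "c \<in> l2"
  shows "cinner x (syn c) = l2inner (U x) c"
proof -
  have "cinner x (syn c) = (\<Sum>n. cinner x (c n *\<^sub>C f n))"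
    unfolding syn_def by (rule cinner_suminf_right[OF summable_synthesis[OF assms]])
  then show ?thesis by (simp add: cinner_scaleC_right U_apply mult.commute l2inner_def)
qed

lemma adjoint_analysis_op: "c \<in> l2 \<Longrightarrow> adjoint_l2 U c = syn c"
  unfolding adjoint_l2_def
  by (rule the_equality) (auto simp: cinner_syn intro: cinner_ext_right)

lemma syn_lincomb:
  assumes a: "a \<in> l2" and b: "b \<in> l2"
  shows "syn (\<lambda>n. \<alpha> * a n + \<beta> * b n) = \<alpha> *\<^sub>C syn a + \<beta> *\<^sub>C syn b"
proof (rule cinner_ext_right)
  fix x
  show "cinner x (syn (\<lambda>n. \<alpha> * a n + \<beta> * b n)) = cinner x (\<alpha> *\<^sub>C syn a + \<beta> *\<^sub>C syn b)"
    using l2inner_lincomb_right[OF a b U_l2[of x]]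
    by (simp add: cinner_syn l2_lincomb a b cinner_add_right cinner_scaleC_right)
qed

lemma norm_syn_le:
  assumes c: "c \<in> l2"
  shows "norm (syn c) \<le> sqrt B * l2norm c"
proof -
  define s where "s = syn c"
  have "(norm s)\<^sup>2 = Re (cinner s (syn c))" by (simp add: cinner_self_Re s_def)
  also have "\<dots> = Re (l2inner (U s) c)" by (simp add: cinner_syn c)
  also have "\<dots> \<le> l2norm (U s) * l2norm c"
    using cmod_l2inner_le[OF U_l2[of s] c] complex_Re_le_cmod[of "l2inner (U s) c"] by linarith
  also have "\<dots> \<le> sqrt B * norm s * l2norm c"
    by (intro mult_right_mono l2norm_U_le l2norm_nonneg c)
  finally have "norm s * norm s \<le> norm s * (sqrt B * l2norm c)"
    by (simp add: power2_eq_square algebra_simps)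
  then show ?thesis unfolding s_def[symmetric]
    by (cases "norm s = 0") (use B_pos l2norm_nonneg[OF c] in auto)
qed

lemma ker_syn_iff: "c \<in> ker_syn f \<longleftrightarrow> c \<in> l2 \<and> syn c = 0"
proof (cases "c \<in> l2")
  case True
  then have "(\<forall>x. l2inner (U x) c = 0) \<longleftrightarrow> syn c = 0"
    using cinner_ext_right[of "syn c" 0] by (auto simp: cinner_syn[OF True, symmetric])
  then show ?thesis by (simp add: ker_syn_def True)
qed (simp add: ker_syn_def)

lemma subspace_ker_syn: "subspace_l2 (ker_syn f)"
  unfolding subspace_l2_def ker_syn_def
  by (auto simp: l2_zero l2_lincomb l2inner_lincomb_right U_l2)

end

locale frame_seq = bessel_seq +
  fixes A :: real
  assumes A_pos: "0 < A" and A_le_B: "A \<le> B"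
    and frame_lower: "\<And>x. A * (norm x)\<^sup>2 \<le> (\<Sum>n. (cmod (cinner x (f n)))\<^sup>2)"
begin

definition S :: "'a \<Rightarrow> 'a" where "S x = syn (U x)"

lemma cinner_S_right: "cinner y (S x) = l2inner (U y) (U x)"
  unfolding S_def by (rule cinner_syn[OF U_l2])

lemma cinner_S_left: "cinner (S x) y = l2inner (U x) (U y)"
proof -
  have "cinner (S x) y = cnj (cinner y (S x))" by simp
  also have "\<dots> = l2inner (U x) (U y)"
    using l2inner_conj[OF U_l2[of x] U_l2[of y]] by (simp add: cinner_S_right)
  finally show ?thesis .
qed

lemma cinner_S_self: "Re (cinner (S x) x) = (\<Sum>n. (cmod (cinner x (f n)))\<^sup>2)"
  using cinner_S_left[of x x] l2inner_self[OF U_l2[of x]] l2norm_U_sq[of x] by simp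

lemma clinear_S: "clinear S"
  unfolding clinear_def
proof (intro allI)
  fix a x y
  show "S (a *\<^sub>C x + y) = a *\<^sub>C S x + S y"
  proof (rule cinner_ext_left)
    fix z
    show "cinner (S (a *\<^sub>C x + y)) z = cinner (a *\<^sub>C S x + S y) z"
      using U_lincomb[of a x 1 y] l2inner_lincomb_left[OF U_l2[of x] U_l2[of y] U_l2[of z], of a 1]
      by (simp add: scaleC_one cinner_S_left cinner_add_left cinner_scaleC_left)
  qed
qed

lemma S_inj: "S x = S y \<Longrightarrow> x = y"
proof -
  assume "S x = S y"
  then have "S (x - y) = 0" using clinear_diff[OF clinear_S] by simp
  then have "A * (norm (x - y))\<^sup>2 \<le> 0" using frame_lower[of "x - y"] cinner_S_self[of "x - y"] by simp
  then show "x = y" using A_pos by (simp add: mult_le_0_iff)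
qed

lemma norm_S_le: "norm (S x) \<le> B * norm x"
proof -
  have "(norm (S x))\<^sup>2 = Re (l2inner (U x) (U (S x)))"
    by (simp add: cinner_self_Re[symmetric] cinner_S_left)
  also have "\<dots> \<le> l2norm (U x) * l2norm (U (S x))"
    using cmod_l2inner_le[OF U_l2 U_l2, of x "S x"] complex_Re_le_cmod[of "l2inner (U x) (U (S x))"]
    by linarith
  also have "\<dots> \<le> (sqrt B * norm x) * (sqrt B * norm (S x))"
    by (intro mult_mono l2norm_U_le l2norm_nonneg U_l2) (simp add: less_imp_le[OF B_pos])
  also have "\<dots> = norm (S x) * (B * norm x)" using B_pos by (simp add: algebra_simps)
  finally show ?thesis
    by (cases "norm (S x) = 0") (use B_pos in \<open>auto simp: power2_eq_square\<close>)
qed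

text \<open>
  \<open>S\<close> is inverted by a Neumann series: with \<open>t = A / B\<^sup>2\<close> the operator \<open>Q = I - t S\<close> satisfies
  \<open>\<parallel>Q x\<parallel>\<^sup>2 \<le> (1 - 2 t A + t\<^sup>2 B\<^sup>2) \<parallel>x\<parallel>\<^sup>2 = (1 - (A / B)\<^sup>2) \<parallel>x\<parallel>\<^sup>2\<close>, so \<open>S\<^sup>-\<^sup>1 = t \<Sum>k. Q\<^sup>k\<close>.
\<close>

definition t :: real where "t = A / B\<^sup>2"

definition q :: real where "q = sqrt (1 - (A / B)\<^sup>2)"

definition Q :: "'a \<Rightarrow> 'a" where "Q x = x - complex_of_real t *\<^sub>C S x"

lemma q_nonneg: "0 \<le> q" and q_less_1: "q < 1"
  using A_pos B_pos A_le_B by (simp_all add: q_def power_le_one)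

lemma clinear_Q: "clinear Q"
  using clinear_S unfolding clinear_def Q_def
  by (simp add: scaleC_add_right scaleC_diff_right scaleC_scaleC algebra_simps)

lemma norm_Q_le: "norm (Q x) \<le> q * norm x"
proof -
  have "cinner (Q x) (Q x) = cinner x x - complex_of_real t * (cinner (S x) x + cinner x (S x))
      + complex_of_real t * complex_of_real t * cinner (S x) (S x)"
    unfolding Q_def
    by (simp add: cinner_diff_left cinner_diff_right cinner_scaleC_left cinner_scaleC_right algebra_simps)
  then have "(norm (Q x))\<^sup>2 = Re (cinner x x) - t * (Re (cinner (S x) x) + Re (cinner x (S x)))
      + t * t * Re (cinner (S x) (S x))"
    by (simp add: cinner_self_Re[symmetric])
  also have "Re (cinner x (S x)) = Re (cinner (S x) x)"
    using arg_cong[OF cnj_cinner[of "S x" x], of Re] by (simp del: cnj_cinner)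
  also have "Re (cinner x x) - t * (Re (cinner (S x) x) + Re (cinner (S x) x))
      + t * t * Re (cinner (S x) (S x)) = (norm x)\<^sup>2 - 2 * t * Re (cinner (S x) x) + t\<^sup>2 * (norm (S x))\<^sup>2"
    by (simp add: cinner_self_Re power2_eq_square)
  also have "\<dots> \<le> (norm x)\<^sup>2 - 2 * t * (A * (norm x)\<^sup>2) + t\<^sup>2 * (B * norm x)\<^sup>2"
    using frame_lower[of x] cinner_S_self[of x] norm_S_le[of x] A_pos B_pos
    by (intro add_mono diff_mono mult_left_mono power_mono) (auto simp: t_def)
  also have "\<dots> = (1 - (A / B)\<^sup>2) * (norm x)\<^sup>2"
    using B_pos by (simp add: t_def power2_eq_square field_simps)
  also have "\<dots> = (q * norm x)\<^sup>2"
    using A_pos B_pos A_le_B by (simp add: q_def power_mult_distrib power_le_one)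
  finally show ?thesis by (rule power2_le_imp_le) (simp add: q_nonneg)
qed

lemma norm_Q_power_le: "norm ((Q ^^ k) x) \<le> q ^ k * norm x"
proof (induct k)
  case (Suc k)
  have "norm ((Q ^^ Suc k) x) \<le> q * norm ((Q ^^ k) x)" by (simp add: norm_Q_le)
  also have "\<dots> \<le> q * (q ^ k * norm x)" using Suc q_nonneg by (intro mult_left_mono) auto
  finally show ?case by simp
qed simp

lemma summable_Q_powers: "summable (\<lambda>k. (Q ^^ k) x)"
  by (rule summable_comparison_test'[OF _ norm_Q_power_le])
    (use q_nonneg q_less_1 in \<open>intro summable_mult2 summable_geometric; simp\<close>)

definition Sinv :: "'a \<Rightarrow> 'a" where
  "Sinv h = complex_of_real t *\<^sub>C (\<Sum>k. (Q ^^ k) h)"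

lemma S_Sinv: "S (Sinv h) = h"
proof -
  define s where "s = (\<Sum>k. (Q ^^ k) h)"
  have "norm (Q x) \<le> 1 * norm x" for x
    using norm_Q_le[of x] mult_right_mono[OF less_imp_le[OF q_less_1] norm_ge_zero, of x] by simp
  then have bl: "bounded_linear Q" by (rule clinear_imp_bounded_linear[OF clinear_Q])
  have "Q s = (\<Sum>k. (Q ^^ Suc k) h)"
    unfolding s_def using bounded_linear.suminf[OF bl summable_Q_powers] by simp
  also have "\<dots> = s - h"
    unfolding s_def using suminf_split_head[OF summable_Q_powers] by simp
  finally have Qs: "Q s = s - h" .
  have "S (Sinv h) = complex_of_real t *\<^sub>C S s"
    unfolding Sinv_def s_def[symmetric] by (rule clinear_scaleC[OF clinear_S])
  also have "\<dots> = s - Q s" by (simp add: Q_def)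
  also have "\<dots> = h" using Qs by simp
  finally show ?thesis .
qed

lemma clinear_Sinv: "clinear Sinv"
  unfolding clinear_def
  by (intro allI, rule S_inj) (simp add: S_Sinv clinear_add[OF clinear_S] clinear_scaleC[OF clinear_S])

lemma cinner_Sinv: "cinner (Sinv x) y = cinner x (Sinv y)"
proof -
  have "cinner (Sinv x) (S (Sinv y)) = cinner (S (Sinv x)) (Sinv y)"
    by (simp add: cinner_S_left cinner_S_right)
  then show ?thesis by (simp add: S_Sinv)
qed

lemma norm_Sinv_le: "norm (Sinv x) \<le> norm x / A"
proof -
  define y where "y = Sinv x"
  have "A * (norm y)\<^sup>2 \<le> Re (cinner x y)"
    using frame_lower[of y] cinner_S_self[of y] by (simp add: y_def S_Sinv)
  also have "\<dots> \<le> norm x * norm y"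
    using cmod_cinner_le[of x y] complex_Re_le_cmod[of "cinner x y"] by linarith
  finally have "norm y * (A * norm y) \<le> norm y * norm x"
    by (simp add: power2_eq_square algebra_simps)
  then have "A * norm y \<le> norm x"
    by (cases "norm y = 0") auto
  then show ?thesis unfolding y_def[symmetric] using A_pos by (simp add: field_simps)
qed

lemma norm_le_Sinv: "norm x \<le> B * norm (Sinv x)"
  using norm_S_le[of "Sinv x"] by (simp add: S_Sinv)

definition dual :: "nat \<Rightarrow> 'a" where "dual n = Sinv (f n)"

lemma analysis_op_dual: "analysis_op dual x = U (Sinv x)"
  by (simp add: analysis_op_def dual_def cinner_Sinv)

lemma frame_dual: "frame dual"
  unfolding frame_def frame_on_def
proof (intro exI conjI allI)
  show "0 < A / B\<^sup>2" "0 < B / A\<^sup>2" using A_pos B_pos by simp_all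
  fix x
  have eq: "cinner x (dual n) = cinner (Sinv x) (f n)" for n
    using fun_cong[OF analysis_op_dual[of x], of n] by (simp add: analysis_op_def)
  show "summable (\<lambda>n. if n \<in> UNIV then (cmod (cinner x (dual n)))\<^sup>2 else 0)"
    by (simp add: eq bessel_summable)
  have "A / B\<^sup>2 * (norm x)\<^sup>2 = A * (norm x / B)\<^sup>2" by (simp add: power_divide)
  also have "\<dots> \<le> A * (norm (Sinv x))\<^sup>2"
    using norm_le_Sinv[of x] A_pos B_pos by (intro mult_left_mono power_mono) (auto simp: field_simps)
  also have "\<dots> \<le> (\<Sum>n. (cmod (cinner x (dual n)))\<^sup>2)" unfolding eq by (rule frame_lower)
  finally show "A / B\<^sup>2 * (norm x)\<^sup>2 \<le> (\<Sum>n. if n \<in> UNIV then (cmod (cinner x (dual n)))\<^sup>2 else 0)"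
    by simp
  have "(\<Sum>n. (cmod (cinner x (dual n)))\<^sup>2) \<le> B * (norm (Sinv x))\<^sup>2"
    unfolding eq by (rule bessel_bound)
  also have "\<dots> \<le> B * (norm x / A)\<^sup>2"
    using norm_Sinv_le[of x] B_pos by (intro mult_left_mono power_mono) auto
  also have "\<dots> = B / A\<^sup>2 * (norm x)\<^sup>2" by (simp add: power_divide)
  finally show "(\<Sum>n. if n \<in> UNIV then (cmod (cinner x (dual n)))\<^sup>2 else 0) \<le> B / A\<^sup>2 * (norm x)\<^sup>2"
    by simp
qed

end

lemma frame_imp_frame_seq:
  fixes f :: "nat \<Rightarrow> 'a::chilbert"
  assumes "frame f"
  obtains A B where "frame_seq f B A"
proof -
  obtain A B where A: "0 < A" and B: "0 < B" and h: "\<And>x::'a. summable (\<lambda>n. (cmod (cinner x (f n)))\<^sup>2) \<and>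
     A * (norm x)\<^sup>2 \<le> (\<Sum>n. (cmod (cinner x (f n)))\<^sup>2) \<and> (\<Sum>n. (cmod (cinner x (f n)))\<^sup>2) \<le> B * (norm x)\<^sup>2"
    using assms unfolding frame_def frame_on_def by auto
  have "frame_seq f B (min A B)"
  proof (unfold_locales)
    fix x :: 'a
    have "min A B * (norm x)\<^sup>2 \<le> A * (norm x)\<^sup>2" by (intro mult_right_mono) auto
    then show "min A B * (norm x)\<^sup>2 \<le> (\<Sum>n. (cmod (cinner x (f n)))\<^sup>2)"
      using h[of x] by linarith
  qed (use A B h in auto)
  then show ?thesis by (rule that)
qed

section \<open>Deleting frame elements\<close>

context bessel_seq
begin

text \<open>
  For \<open>c \<in> Ker U\<^sup>*\<close> we have \<open>\<langle>x, f m\<rangle> c m = - \<Sum>\<^bsub>n\<noteq>m\<^esub> \<langle>x, f n\<rangle> c n\<close>, so by Cauchy--Schwarz the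
  coefficient at \<open>m\<close> is controlled by the others.
\<close>

lemma ker_syn_coefficient_bound:
  assumes c: "c \<in> ker_syn f" and cm: "c m \<noteq> 0"
  shows "cmod (U x m) \<le> l2norm ((U x)(m := 0)) * (l2norm c / cmod (c m))"
proof -
  have cl2: "c \<in> l2" and orth: "l2inner (U x) c = 0" using c by (auto simp: ker_syn_def)
  have "cmod (U x m) * cmod (c m) = cmod (l2inner ((U x)(m := 0)) c)"
    using l2inner_fun_upd_zero[OF U_l2 cl2, of x m] orth by (simp add: norm_mult)
  also have "\<dots> \<le> l2norm ((U x)(m := 0)) * l2norm c"
    by (rule cmod_l2inner_le[OF l2_fun_upd_zero[OF U_l2] cl2])
  finally show ?thesis using cm by (simp add: field_simps)
qed

end

context frame_seq
begin

lemma frame_delete: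
  assumes c: "c \<in> ker_syn f" and cm: "c m \<noteq> 0"
  shows "frame (f(m := 0))"
proof -
  define K where "K = (l2norm c / cmod (c m))\<^sup>2"
  have K: "0 \<le> K" unfolding K_def by simp
  have eq: "cinner x ((f(m := 0)) n) = ((U x)(m := 0)) n" for x n by (simp add: analysis_op_def)
  have sq: "(\<Sum>n. (cmod (cinner x ((f(m := 0)) n)))\<^sup>2) = (l2norm ((U x)(m := 0)))\<^sup>2" for x
    unfolding eq by (rule l2norm_sq[OF l2_fun_upd_zero[OF U_l2], symmetric])
  have sm: "summable (\<lambda>n. (cmod (cinner x ((f(m := 0)) n)))\<^sup>2)" for x
    unfolding eq using l2_fun_upd_zero[OF U_l2] by (simp add: l2_iff)
  have lower: "(\<Sum>n. (cmod (cinner x (f n)))\<^sup>2) \<le> (1 + K) * (l2norm ((U x)(m := 0)))\<^sup>2" for x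
  proof -
    have "(cmod (U x m))\<^sup>2 \<le> (l2norm ((U x)(m := 0)) * (l2norm c / cmod (c m)))\<^sup>2"
      by (rule power_mono[OF ker_syn_coefficient_bound[OF c cm]]) simp
    also have "\<dots> = K * (l2norm ((U x)(m := 0)))\<^sup>2" by (simp add: K_def field_simps)
    finally have "(cmod (U x m))\<^sup>2 \<le> K * (l2norm ((U x)(m := 0)))\<^sup>2" .
    moreover have "(cmod (U x m))\<^sup>2 + (l2norm ((U x)(m := 0)))\<^sup>2 = (\<Sum>n. (cmod (cinner x (f n)))\<^sup>2)"
      using l2norm_fun_upd_zero[OF U_l2, of x m] l2norm_U_sq[of x] by simp
    ultimately show ?thesis unfolding distrib_right by linarith
  qed
  have upper: "(l2norm ((U x)(m := 0)))\<^sup>2 \<le> (\<Sum>n. (cmod (cinner x (f n)))\<^sup>2)" for x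
    using l2norm_fun_upd_zero[OF U_l2, of x m] l2norm_U_sq[of x] by simp
  show ?thesis
    unfolding frame_def frame_on_def
  proof (intro exI conjI allI)
    show "0 < A / (1 + K)" "0 < B" using A_pos B_pos K by simp_all
    fix x
    show "summable (\<lambda>n. if n \<in> UNIV then (cmod (cinner x ((f(m := 0)) n)))\<^sup>2 else 0)"
      using sm by simp
    show "A / (1 + K) * (norm x)\<^sup>2 \<le> (\<Sum>n. if n \<in> UNIV then (cmod (cinner x ((f(m := 0)) n)))\<^sup>2 else 0)"
      using frame_lower[of x] lower[of x] K sq[of x] by (simp add: field_simps)
    show "(\<Sum>n. if n \<in> UNIV then (cmod (cinner x ((f(m := 0)) n)))\<^sup>2 else 0) \<le> B * (norm x)\<^sup>2"
      using upper[of x] bessel_bound[of x] sq[of x] by simp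
  qed
qed

end

definition restrict_seq :: "nat set \<Rightarrow> (nat \<Rightarrow> 'a::chilbert) \<Rightarrow> nat \<Rightarrow> 'a" where
  "restrict_seq I f = (\<lambda>n. if n \<in> I then f n else 0)"

lemma frame_on_iff_frame_restrict_seq: "frame_on I f \<longleftrightarrow> frame (restrict_seq I f)"
proof -
  have "(\<lambda>n. if n \<in> UNIV then (cmod (cinner x (restrict_seq I f n)))\<^sup>2 else 0) =
        (\<lambda>n. if n \<in> I then (cmod (cinner x (f n)))\<^sup>2 else 0)" for x
    by (auto simp: restrict_seq_def fun_eq_iff)
  then show ?thesis unfolding frame_def frame_on_def by simp
qed

lemma frame_on_mono:
  assumes f: "frame f" and I: "frame_on I f" and "I \<subseteq> I'"
  shows "frame_on I' f"
proof -
  obtain A :: real where A: "0 < A"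
    and sI: "\<And>x. summable (\<lambda>n. if n \<in> I then (cmod (cinner x (f n)))\<^sup>2 else 0)"
    and lower: "\<And>x. A * (norm x)\<^sup>2 \<le> (\<Sum>n. if n \<in> I then (cmod (cinner x (f n)))\<^sup>2 else 0)"
    using I unfolding frame_on_def by blast
  obtain B :: real where B: "0 < B"
    and s: "\<And>x. summable (\<lambda>n. if n \<in> UNIV then (cmod (cinner x (f n)))\<^sup>2 else 0)"
    and upper: "\<And>x. (\<Sum>n. if n \<in> UNIV then (cmod (cinner x (f n)))\<^sup>2 else 0) \<le> B * (norm x)\<^sup>2"
    using f unfolding frame_def frame_on_def by blast
  have sI': "summable (\<lambda>n. if n \<in> I' then (cmod (cinner x (f n)))\<^sup>2 else 0)" for x
    by (rule summable_comparison_test'[OF s[of x]]) auto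
  show ?thesis
    unfolding frame_on_def
  proof (intro exI conjI allI)
    fix x
    have "(\<Sum>n. if n \<in> I then (cmod (cinner x (f n)))\<^sup>2 else 0) \<le>
        (\<Sum>n. if n \<in> I' then (cmod (cinner x (f n)))\<^sup>2 else 0)"
      by (rule suminf_le[OF _ sI sI']) (use \<open>I \<subseteq> I'\<close> in auto)
    with lower[of x] show "A * (norm x)\<^sup>2 \<le> (\<Sum>n. if n \<in> I' then (cmod (cinner x (f n)))\<^sup>2 else 0)"
      by (rule order_trans)
    have "(\<Sum>n. if n \<in> I' then (cmod (cinner x (f n)))\<^sup>2 else 0) \<le>
        (\<Sum>n. if n \<in> UNIV then (cmod (cinner x (f n)))\<^sup>2 else 0)"
      by (rule suminf_le[OF _ sI' s]) auto
    with upper[of x] show "(\<Sum>n. if n \<in> I' then (cmod (cinner x (f n)))\<^sup>2 else 0) \<le> B * (norm x)\<^sup>2"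
      by (rule order_trans[rotated])
  qed (use A B sI' in auto)
qed

lemma l2inner_analysis_op_restrict_seq:
  assumes "\<And>j. j \<in> J \<Longrightarrow> c j = 0"
  shows "l2inner (analysis_op (restrict_seq (-J) f) x) c = l2inner (analysis_op f x) c"
  unfolding l2inner_def using assms
  by (intro suminf_cong) (auto simp: analysis_op_def restrict_seq_def)

lemma frame_delete_more:
  assumes f: "frame f" and nf: "\<not> finite_dim_l2 (ker_syn f)" and J: "finite J"
    and fJ: "frame_on (-J) f"
  obtains m where "m \<notin> J" "frame_on (-(insert m J)) f"
proof -
  obtain A B where "frame_seq f B A" using f by (rule frame_imp_frame_seq)
  then have "subspace_l2 (ker_syn f)" by (rule bessel_seq.subspace_ker_syn[OF frame_seq.axioms(1)])
  then obtain c m where c: "c \<in> ker_syn f" and cJ: "\<forall>j\<in>J. c j = 0" and cm: "c m \<noteq> 0"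
    using infinite_dim_nonzero_vanishing_on[OF _ nf J] by blast
  obtain A' B' where g: "frame_seq (restrict_seq (-J) f) B' A'"
    using fJ[unfolded frame_on_iff_frame_restrict_seq] by (rule frame_imp_frame_seq)
  have "c \<in> ker_syn (restrict_seq (-J) f)"
    using c cJ l2inner_analysis_op_restrict_seq[of J c f] by (simp add: ker_syn_def)
  then have "frame ((restrict_seq (-J) f)(m := 0))" using frame_seq.frame_delete[OF g] cm by blast
  moreover have "(restrict_seq (-J) f)(m := 0) = restrict_seq (-(insert m J)) f"
    by (auto simp: restrict_seq_def)
  moreover have "m \<notin> J" using cJ cm by auto
  ultimately show ?thesis using that by (simp add: frame_on_iff_frame_restrict_seq)
qed

lemma excess_infinite_if_infinite_dim:
  assumes f: "frame f" and nf: "\<not> finite_dim_l2 (ker_syn f)"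
  shows "excess f = \<infinity>"
proof -
  have del: "\<exists>J. finite J \<and> card J = N \<and> frame_on (-J) f" for N
  proof (induct N)
    case 0
    show ?case using f by (intro exI[of _ "{}"]) (simp add: frame_def)
  next
    case (Suc N)
    then obtain J where J: "finite J" "card J = N" "frame_on (-J) f" by blast
    then obtain m where "m \<notin> J" "frame_on (-(insert m J)) f"
      using frame_delete_more[OF f nf] by blast
    then show ?case using J by (intro exI[of _ "insert m J"]) simp
  qed
  have le: "enat N \<le> excess f" for N
  proof -
    obtain J where "finite J" "card J = N" "frame_on (-J) f" using del by blast
    then have "enat N \<in> {if finite J then enat (card J) else \<infinity> | J. frame_on (- J) f}"
      by (intro CollectI exI[of _ J]) simp
    then show ?thesis unfolding excess_def by (rule Sup_upper)
  qed
  show ?thesis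
  proof (cases "excess f")
    case (enat k)
    then show ?thesis using le[of "Suc k"] by simp
  qed simp
qed

lemma excess_infinite_imp_large:
  assumes "excess f = \<infinity>"
  shows "\<exists>J. frame_on (-J) f \<and> (infinite J \<or> m < card J)"
proof (rule ccontr)
  assume "\<not> ?thesis"
  then have small: "finite J \<and> card J \<le> m" if "frame_on (-J) f" for J
    using that by (meson not_le)
  have "excess f \<le> enat m"
    unfolding excess_def
  proof (rule Sup_least)
    fix e assume "e \<in> {if finite J then enat (card J) else \<infinity> | J. frame_on (- J) f}"
    then obtain J where "e = (if finite J then enat (card J) else \<infinity>)" "frame_on (- J) f" by blast
    then show "e \<le> enat m" using small by simp
  qed
  then show False using assms by simp
qed

text \<open>
  If the elements indexed by \<open>J\<close> can be deleted, the remaining frame \<open>g\<close> reconstructs every \<open>f j\<close>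
  from coefficients vanishing on \<open>J\<close>; subtracting these coefficients from \<open>\<delta>\<^sub>j\<close> gives vectors of
  \<open>Ker U\<^sup>*\<close> that restrict to the unit vectors on \<open>J\<close>.
\<close>

lemma ker_syn_unit_vectors:
  assumes f: "frame f" and fJ: "frame_on (-J) f"
  obtains d where "\<And>j. d j \<in> ker_syn f" "\<And>i j. i \<in> J \<Longrightarrow> d j i = (if i = j then 1 else 0)"
proof -
  define g where "g = restrict_seq (-J) f"
  obtain A B where g: "frame_seq g B A"
    using fJ[unfolded frame_on_iff_frame_restrict_seq] unfolding g_def by (rule frame_imp_frame_seq)
  obtain A' B' where "frame_seq f B' A'" using f frame_imp_frame_seq by blast
  then have Uf: "analysis_op f x \<in> l2" for x by (rule bessel_seq.U_l2[OF frame_seq.axioms(1)])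
  define cc where "cc j = analysis_op g (frame_seq.Sinv g B A (f j))" for j
  have cc: "cc j \<in> l2" for j
    unfolding cc_def by (rule bessel_seq.U_l2[OF frame_seq.axioms(1)[OF g]])
  have ccJ: "cc j i = 0" if "i \<in> J" for i j
    using that by (simp add: cc_def g_def analysis_op_def restrict_seq_def)
  have syn_cc: "bessel_seq.syn g (cc j) = f j" for j
    using frame_seq.S_Sinv[OF g] unfolding cc_def frame_seq.S_def[OF g] .
  define d where "d j = (\<lambda>n. (if n = j then 1 else 0) - cc j n)" for j
  show ?thesis
  proof
    fix j
    have "l2inner (analysis_op f x) (d j) = 0" for x
    proof -
      have "l2inner (analysis_op f x) (d j) =
          analysis_op f x j - l2inner (analysis_op g x) (cc j)"
        unfolding d_def g_def using ccJ
        by (simp add: l2inner_diff_right[OF l2_finite_support cc Uf] l2inner_delta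
            l2inner_analysis_op_restrict_seq)
      also have "l2inner (analysis_op g x) (cc j) = cinner x (bessel_seq.syn g (cc j))"
        by (rule bessel_seq.cinner_syn[OF frame_seq.axioms(1)[OF g] cc, symmetric])
      finally show ?thesis by (simp add: syn_cc analysis_op_def)
    qed
    then show "d j \<in> ker_syn f"
      unfolding ker_syn_def d_def using l2_diff[OF l2_finite_support cc] by simp
  next
    fix i j assume "i \<in> J"
    then show "d j i = (if i = j then 1 else 0)" by (simp add: d_def ccJ)
  qed
qed

lemma finite_dim_imp_excess_finite:
  assumes f: "frame f" and fd: "finite_dim_l2 (ker_syn f)"
  shows "excess f \<noteq> \<infinity>"
proof
  assume "excess f = \<infinity>"
  obtain Ob where span: "\<And>w. w \<in> ker_syn f \<Longrightarrow> in_span Ob w"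
    using fd unfolding finite_dim_l2_def by blast
  obtain J0 where J0: "frame_on (-J0) f" and big: "infinite J0 \<or> length Ob < card J0"
    using excess_infinite_imp_large[OF \<open>excess f = \<infinity>\<close>] by blast
  obtain J where J: "J \<subseteq> J0" "finite J" "card J = Suc (length Ob)"
  proof (cases "finite J0")
    case True
    then have "Suc (length Ob) \<le> card J0" using big by simp
    then show ?thesis using that by (rule obtain_subset_with_card_n) auto
  next
    case False
    from infinite_arbitrarily_large[OF this, of "Suc (length Ob)"] that show ?thesis by blast
  qed
  have "frame_on (-J) f" using J(1) by (intro frame_on_mono[OF f J0]) auto
  then obtain d where d: "\<And>j. d j \<in> ker_syn f" "\<And>i j. i \<in> J \<Longrightarrow> d j i = (if i = j then 1 else 0)"
    using ker_syn_unit_vectors[OF f] by blast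
  have "card J \<le> length Ob" by (rule card_le_length_spanning_list[OF span J(2), where d = d]) (use d in auto)
  then show False using J(3) by simp
qed

lemma near_riesz_basis_iff_finite_dim_ker_syn:
  assumes "frame f"
  shows "near_riesz_basis f \<longleftrightarrow> finite_dim_l2 (ker_syn f)"
proof
  show "finite_dim_l2 (ker_syn f)" if "near_riesz_basis f"
  proof (rule ccontr)
    assume "\<not> finite_dim_l2 (ker_syn f)"
    with that show False
      using excess_infinite_if_infinite_dim[OF assms] by (simp add: near_riesz_basis_def)
  qed
  show "near_riesz_basis f" if "finite_dim_l2 (ker_syn f)"
    using that finite_dim_imp_excess_finite[OF assms] assms unfolding near_riesz_basis_def by blast
qed

section \<open>The operator \<open>I - V U\<^sup>*\<close>\<close>

context frame_seq
begin

text \<open>For the canonical dual frame, \<open>I - V U\<^sup>*\<close> is the orthogonal projection onto \<open>Ker U\<^sup>*\<close>.\<close>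

definition ker_proj :: "(nat \<Rightarrow> complex) \<Rightarrow> nat \<Rightarrow> complex" where
  "ker_proj c = (\<lambda>n. c n - analysis_op dual (adjoint_l2 U c) n)"

lemma ker_proj_eq: "c \<in> l2 \<Longrightarrow> ker_proj c = (\<lambda>n. c n - U (Sinv (syn c)) n)"
  by (simp add: ker_proj_def adjoint_analysis_op analysis_op_dual)

lemma ker_proj_in_ker_syn:
  assumes c: "c \<in> l2"
  shows "ker_proj c \<in> ker_syn f"
proof -
  have "l2inner (U y) (ker_proj c) = 0" for y
  proof -
    have "l2inner (U y) (U (Sinv (syn c))) = cinner y (S (Sinv (syn c)))"
      by (simp add: cinner_S_right)
    also have "\<dots> = l2inner (U y) c" by (simp add: S_Sinv cinner_syn c)
    finally show ?thesis
      unfolding ker_proj_eq[OF c] by (simp add: l2inner_diff_right[OF c U_l2 U_l2])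
  qed
  then show ?thesis unfolding ker_syn_def ker_proj_eq[OF c] using c by (simp add: l2_diff U_l2)
qed

lemma l2norm_ker_proj_le:
  assumes c: "c \<in> l2"
  shows "l2norm (ker_proj c) \<le> (1 + B / A) * l2norm c"
proof -
  have "l2norm (ker_proj c) \<le> l2norm c + l2norm (U (Sinv (syn c)))"
    unfolding ker_proj_eq[OF c] by (rule l2norm_diff_le[OF c U_l2])
  also have "l2norm (U (Sinv (syn c))) \<le> sqrt B * norm (Sinv (syn c))" by (rule l2norm_U_le)
  also have "\<dots> \<le> sqrt B * (norm (syn c) / A)"
    using B_pos by (intro mult_left_mono norm_Sinv_le) simp
  also have "\<dots> \<le> sqrt B * (sqrt B * l2norm c / A)"
    using B_pos A_pos by (intro mult_left_mono divide_right_mono norm_syn_le c) auto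
  also have "\<dots> = B / A * l2norm c" using B_pos by simp
  finally show ?thesis by (simp add: algebra_simps)
qed

lemma ker_proj_lincomb:
  assumes a: "a \<in> l2" and b: "b \<in> l2"
  shows "ker_proj (\<lambda>n. \<alpha> * a n + \<beta> * b n) = (\<lambda>n. \<alpha> * ker_proj a n + \<beta> * ker_proj b n)"
proof -
  have "Sinv (\<alpha> *\<^sub>C syn a + \<beta> *\<^sub>C syn b) = \<alpha> *\<^sub>C Sinv (syn a) + \<beta> *\<^sub>C Sinv (syn b)"
    using clinear_Sinv by (simp add: clinear_add clinear_scaleC)
  then show ?thesis
    by (simp add: ker_proj_eq a b l2_lincomb syn_lincomb U_lincomb fun_eq_iff algebra_simps)
qed

lemma compact_op_ker_proj:
  assumes fd: "finite_dim_l2 (ker_syn f)"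
  shows "compact_op_l2 ker_proj"
  unfolding compact_op_l2_def
proof (intro conjI ballI allI impI)
  show "ker_proj a \<in> l2" if "a \<in> l2" for a
    using ker_proj_in_ker_syn[OF that] by (simp add: ker_syn_def)
  show "ker_proj (\<lambda>n. \<alpha> * a n + \<beta> * b n) = (\<lambda>n. \<alpha> * ker_proj a n + \<beta> * ker_proj b n)"
    if "a \<in> l2" "b \<in> l2" for a b \<alpha> \<beta>
    using ker_proj_lincomb[OF that] .
  fix x :: "nat \<Rightarrow> nat \<Rightarrow> complex" and C :: real
  assume x: "\<forall>k. x k \<in> l2 \<and> l2norm (x k) \<le> C"
  have inK: "ker_proj (x k) \<in> ker_syn f" for k using x ker_proj_in_ker_syn by blast
  have "l2norm (ker_proj (x k)) \<le> (1 + B / A) * C" for k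
  proof -
    have "l2norm (ker_proj (x k)) \<le> (1 + B / A) * l2norm (x k)" using x l2norm_ker_proj_le by blast
    also have "\<dots> \<le> (1 + B / A) * C" using x A_pos B_pos by (intro mult_left_mono) auto
    finally show ?thesis .
  qed
  from finite_dim_bounded_convergent_subseq[OF subspace_ker_syn fd inK this]
  show "\<exists>r y. strict_mono r \<and> y \<in> l2 \<and> (\<lambda>k. l2norm (\<lambda>n. ker_proj (x (r k)) n - y n)) \<longlonglongrightarrow> 0" .
qed

end

lemma compact_op_if_finite_dim_ker_syn:
  fixes f :: "nat \<Rightarrow> 'a::chilbert"
  assumes f: "frame f" and fd: "finite_dim_l2 (ker_syn f)"
  shows "\<exists>g :: nat \<Rightarrow> 'a. frame g \<and>
       compact_op_l2 (\<lambda>c. (\<lambda>n. c n - analysis_op g (adjoint_l2 (analysis_op f) c) n))"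
proof -
  obtain A B where fs: "frame_seq f B A" using f by (rule frame_imp_frame_seq)
  show ?thesis
    using frame_seq.frame_dual[OF fs] frame_seq.compact_op_ker_proj[OF fs fd]
    unfolding frame_seq.ker_proj_def[OF fs] by blast
qed

text \<open>Any \<open>V\<close> works here: \<open>I - V U\<^sup>*\<close> is the identity on \<open>Ker U\<^sup>*\<close>.\<close>

lemma finite_dim_ker_syn_if_compact_op:
  fixes f g :: "nat \<Rightarrow> 'a::chilbert"
  assumes f: "frame f"
    and cpt: "compact_op_l2 (\<lambda>c. (\<lambda>n. c n - analysis_op g (adjoint_l2 (analysis_op f) c) n))"
  shows "finite_dim_l2 (ker_syn f)"
proof (rule ccontr)
  assume nf: "\<not> finite_dim_l2 (ker_syn f)"
  obtain A B where "frame_seq f B A" using f by (rule frame_imp_frame_seq)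
  then have bs: "bessel_seq f B" by (rule frame_seq.axioms(1))
  obtain u :: "nat \<Rightarrow> nat \<Rightarrow> complex" where uK: "\<And>k. u k \<in> ker_syn f"
    and orth: "\<And>k l. l2inner (u k) (u l) = (if k = l then 1 else 0)"
    using infinite_dim_orthonormal_seq[OF bessel_seq.subspace_ker_syn[OF bs] nf] by blast
  have u: "u k \<in> l2" for k using uK by (simp add: ker_syn_def)
  have "adjoint_l2 (analysis_op f) (u k) = 0" for k
    using uK[of k] bessel_seq.ker_syn_iff[OF bs] bessel_seq.adjoint_analysis_op[OF bs u] by simp
  then have fixed: "u k n - analysis_op g (adjoint_l2 (analysis_op f) (u k)) n = u k n" for k n
    by (simp add: analysis_op_def)
  have "l2norm (u k) \<le> 1" for k using l2norm_eq_1_iff[OF u] orth by simp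
  with u have "\<exists>r y. strict_mono r \<and> y \<in> l2 \<and> (\<lambda>k. l2norm (\<lambda>n. u (r k) n - y n)) \<longlonglongrightarrow> 0"
    using cpt[unfolded compact_op_l2_def, THEN conjunct2, THEN conjunct2, rule_format, of u 1]
    by (simp add: fixed)
  then obtain r y where "strict_mono r" "y \<in> l2" "(\<lambda>k. l2norm (\<lambda>n. u (r k) n - y n)) \<longlonglongrightarrow> 0"
    by blast
  then show False using orthonormal_seq_no_convergent_subseq[OF u orth] by blast
qed

theorem corollary3p3:
  fixes f :: "nat \<Rightarrow> 'a::chilbert"
  assumes "separable_space (euclidean :: 'a topology)"
    and "infinite_dimensional_C TYPE('a)"
    and "frame f"
  shows "near_riesz_basis f \<longleftrightarrow>
    (\<exists>g :: nat \<Rightarrow> 'a. frame g \<and>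
       compact_op_l2 (\<lambda>c. (\<lambda>n. c n - analysis_op g (adjoint_l2 (analysis_op f) c) n)))"
proof -
  have "near_riesz_basis f \<longleftrightarrow> finite_dim_l2 (ker_syn f)"
    by (rule near_riesz_basis_iff_finite_dim_ker_syn[OF assms(3)])
  also have "\<dots> \<longleftrightarrow> (\<exists>g :: nat \<Rightarrow> 'a. frame g \<and>
       compact_op_l2 (\<lambda>c. (\<lambda>n. c n - analysis_op g (adjoint_l2 (analysis_op f) c) n)))"
    using compact_op_if_finite_dim_ker_syn[OF assms(3)] finite_dim_ker_syn_if_compact_op[OF assms(3)]
    by blast
  finally show ?thesis .
qed

end
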